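(* Let $1\le p<d\le n$. Let $C_n(k)$ be the right $Y_n$-comodules of the context, and let $C_n(d-p;\,d-p,\,p)\subseteq C_n(d-p)\otimes C_n(p)$ be the span of the coefficients of all powers of $v^{-1}$ in the series $\tilde f_I(v+d-p)\otimes\tilde f_\Lambda(v)$, for $I\in\binom{[n]}{d-p}$ and $\Lambda\in\binom{[n]}p$. This is a subcomodule of the tensor product comodule. Let $\mu:C_n(d-p;\,d-p,\,p)\to C_n(d)$ be the map given by $$\tilde f_I(u+d-p)\otimes\tilde f_\Lambda(u)\mapsto\tilde f_{I|\Lambda}(u+d-p),$$ i.e. the coefficient of $u^{-r}$ on the left is sent to the coefficient of $u^{-r}$ on the right. Then $\mu$ is a morphism of right $Y_n$-comodules.
   Context: $Y_n$ is the Yangian: the complex associative unital algebra with generators $t^{(r)}_{ij}$ ($1\le i,j\le n$, $r\ge1$) and relations $[t_{ij}^{(r+1)},t_{kl}^{(s)}]-[t_{ij}^{(r)},t_{kl}^{(s+1)}]=t_{kj}^{(r)}t_{il}^{(s)}-t_{kj}^{(s)}t_{il}^{(r)}$ ($r,s\ge0$, $t^{(0)}_{ij}=\delta_{ij}$). Put $t_{ij}(u)=\delta_{ij}+\sum_{r\ge1}t^{(r)}_{ij}u^{-r}$, with coproduct $\Delta(t_{ij}(u))=\sum_kt_{ik}(u)\otimes t_{kj}(u)$. The Yangian minor is $$t^I_J(u)=\sum_{\sigma\in\mathfrak S_d}\operatorname{sgn}(\sigma)\,t_{i_{\sigma(1)}j_1}(u)\,t_{i_{\sigma(2)}j_2}(u-1)\cdots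 t_{i_{\sigma(d)}j_d}(u-d+1).$$ Shifts $g(u+a)$ are obtained by expanding $(u+a)^{-r}$ in powers of $u^{-1}$. $C_n(k)$ is the complex vector space spanned by $\tilde f^{(r)}_I$ ($I\in[n]^k$, $r\ge0$) modulo the coefficients of $\tilde f_{\sigma I}(u)=\operatorname{sgn}(\sigma)\tilde f_I(u)$ ($\sigma\in\mathfrak S_k$), where $\tilde f_I(u)=\sum_{r\ge0}\tilde f_I^{(r)}u^{-r}$. It is a right $Y_n$-comodule via $\rho(\tilde f_I(u))=\sum_{K\in\binom{[n]}k}\tilde f_K(u)\otimes t^K_I(u)$. Tensor products carry the structure $\rho(x\otimes y)=\sum x_{(0)}\otimes y_{(0)}\otimes x_{(1)}y_{(1)}$. $I|\Lambda$ denotes concatenation of the increasing listings of $I$ and $\Lambda$. *)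

theory Defs
  imports Complex_Main "HOL-Library.Poly_Mapping" "HOL-Combinatorics.Permutations"
begin

text \<open>Words in the generators; a generator t_ij^(r) is the triple (i,j,r).\<close>
datatype yword = YW "(nat \<times> nat \<times> nat) list"

instantiation yword :: monoid_add
begin
definition zero_yword :: yword where "zero_yword = YW []"
fun plus_yword :: "yword \<Rightarrow> yword \<Rightarrow> yword" where
  "plus_yword (YW a) (YW b) = YW (a @ b)"
instance
proof
  fix a b c :: yword
  show "a + b + c = a + (b + c)" by (cases a; cases b; cases c) auto
  show "0 + a = a" by (cases a) (simp add: zero_yword_def)
  show "a + 0 = a" by (cases a) (simp add: zero_yword_def)
qed
end

text \<open>The free associative unital complex algebra on the generators.\<close>
type_synonym fyang = "yword \<Rightarrow>\<^sub>0 complex"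

definition yconst :: "complex \<Rightarrow> fyang" where
  "yconst c = Poly_Mapping.single 0 c"

definition ygen :: "nat \<Rightarrow> nat \<Rightarrow> nat \<Rightarrow> fyang" where
  "ygen i j r = Poly_Mapping.single (YW [(i, j, r)]) 1"

definition tgen :: "nat \<Rightarrow> nat \<Rightarrow> nat \<Rightarrow> fyang" where
  "tgen i j r = (if r = 0 then (if i = j then 1 else 0) else ygen i j r)"

definition yrel :: "nat \<Rightarrow> nat \<Rightarrow> nat \<Rightarrow> nat \<Rightarrow> nat \<Rightarrow> nat \<Rightarrow> fyang" where
  "yrel i j k l r s =
     (tgen i j (Suc r) * tgen k l s - tgen k l s * tgen i j (Suc r))
   - (tgen i j r * tgen k l (Suc s) - tgen k l (Suc s) * tgen i j r)
   - (tgen k j r * tgen i l s - tgen k j s * tgen i l r)"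

text \<open>The two-sided ideal of defining relations of Y_n (generators with indices
  outside [n] or with r = 0 are not generators of Y_n and are killed).\<close>
inductive_set yideal :: "nat \<Rightarrow> fyang set" for n :: nat where
  rel: "\<lbrakk>i \<in> {1..n}; j \<in> {1..n}; k \<in> {1..n}; l \<in> {1..n}\<rbrakk> \<Longrightarrow> yrel i j k l r s \<in> yideal n"
| extra: "\<not> (i \<in> {1..n} \<and> j \<in> {1..n} \<and> r \<ge> 1) \<Longrightarrow> ygen i j r \<in> yideal n"
| zero: "0 \<in> yideal n"
| add: "\<lbrakk>a \<in> yideal n; b \<in> yideal n\<rbrakk> \<Longrightarrow> a + b \<in> yideal n"
| mult: "a \<in> yideal n \<Longrightarrow> x * a * y \<in> yideal n"

text \<open>Equality in Y_n = Y(n) of two elements of the free algebra.\<close>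
definition yeq :: "nat \<Rightarrow> fyang \<Rightarrow> fyang \<Rightarrow> bool" where
  "yeq n a b \<longleftrightarrow> a - b \<in> yideal n"

text \<open>A series g(u) = sum_r g_r u^{-r} is represented by r \<mapsto> g_r.\<close>
type_synonym yser = "nat \<Rightarrow> fyang"

definition ser_one :: yser where "ser_one m = (if m = 0 then 1 else 0)"

definition ser_mult :: "yser \<Rightarrow> yser \<Rightarrow> yser" where
  "ser_mult f g m = (\<Sum>a\<le>m. f a * g (m - a))"

definition ser_prod_list :: "yser list \<Rightarrow> yser" where
  "ser_prod_list xs = foldr ser_mult xs ser_one"

text \<open>Coefficient of u^{-m} in (u+a)^{-r}.\<close>
definition shiftcoef :: "complex \<Rightarrow> nat \<Rightarrow> nat \<Rightarrow> complex" where
  "shiftcoef a r m = (if r \<le> m then ((- of_nat r) gchoose (m - r)) * a ^ (m - r) else 0)"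

text \<open>g(u+a), expanded in powers of u^{-1}.\<close>
definition ser_shift :: "complex \<Rightarrow> yser \<Rightarrow> yser" where
  "ser_shift a f m = (\<Sum>r\<le>m. yconst (shiftcoef a r m) * f r)"

definition tser :: "nat \<Rightarrow> nat \<Rightarrow> yser" where
  "tser i j = tgen i j"

definition tminor :: "nat list \<Rightarrow> nat list \<Rightarrow> yser" where
  "tminor I J = (\<lambda>m. \<Sum>\<sigma>\<in>{\<sigma>. \<sigma> permutes {..<length J}}.
      yconst (of_int (sign \<sigma>)) *
      ser_prod_list (map (\<lambda>k. ser_shift (- of_nat k) (tser (I ! \<sigma> k) (J ! k))) [0..<length J]) m)"

text \<open>binom([n],k) as strictly increasing lists.\<close>
definition subs :: "nat \<Rightarrow> nat \<Rightarrow> nat list set" where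
  "subs n k = {K. sorted_wrt (<) K \<and> set K \<subseteq> {1..n} \<and> length K = k}"

text \<open>Basis index (K, r) of C_n(k) stands for tilde f_K^(r), K increasing.\<close>
type_synonym cidx = "nat list \<times> nat"
type_synonym cvec = "cidx \<Rightarrow>\<^sub>0 complex"
type_synonym cvec2 = "(cidx \<times> cidx) \<Rightarrow>\<^sub>0 complex"

definition ninv :: "nat list \<Rightarrow> nat" where
  "ninv xs = card {(i, j). i < j \<and> j < length xs \<and> xs ! j < xs ! i}"

text \<open>tilde f_I^(r) for an arbitrary tuple I in [n]^k, via antisymmetry.\<close>
definition fvec :: "nat list \<Rightarrow> nat \<Rightarrow> cvec" where
  "fvec I r = (if distinct I then Poly_Mapping.single (sort I, r) ((-1) ^ ninv I) else 0)"

text \<open>Coaction rho : C_n(k) \<rightarrow> C_n(k) \<otimes> Y_n; elements of C_n(k) \<otimes> Y_n are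
  given by their coordinate functions with respect to the basis of C_n(k).\<close>
definition rho :: "nat \<Rightarrow> nat \<Rightarrow> cvec \<Rightarrow> cidx \<Rightarrow> fyang" where
  "rho n k v = (\<lambda>(K, a). if K \<in> subs n k then
      (\<Sum>(J, r)\<in>Poly_Mapping.keys v. yconst (Poly_Mapping.lookup v (J, r)) * (if a \<le> r then tminor K J (r - a) else 0))
    else 0)"

text \<open>Coaction on a tensor product: rho(x \<otimes> y) = x0 \<otimes> y0 \<otimes> x1 y1.\<close>
definition rho2 :: "nat \<Rightarrow> nat \<Rightarrow> nat \<Rightarrow> cvec2 \<Rightarrow> cidx \<times> cidx \<Rightarrow> fyang" where
  "rho2 n k l w = (\<lambda>(i1, i2). \<Sum>j\<in>Poly_Mapping.keys w. yconst (Poly_Mapping.lookup w j)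
      * rho n k (Poly_Mapping.single (fst j) 1) i1 * rho n l (Poly_Mapping.single (snd j) 1) i2)"

text \<open>(M \<otimes> id) applied to a (finitely supported) element of (C \<otimes> C) \<otimes> Y_n.\<close>
definition tensor_map :: "(cvec2 \<Rightarrow> cvec) \<Rightarrow> (cidx \<times> cidx \<Rightarrow> fyang) \<Rightarrow> cidx \<Rightarrow> fyang" where
  "tensor_map M Z = (\<lambda>i. \<Sum>j\<in>{j. Z j \<noteq> 0}. yconst (Poly_Mapping.lookup (M (Poly_Mapping.single j 1)) i) * Z j)"

text \<open>Coefficient of v^{-s} in tilde f_I(v+c) \<otimes> tilde f_Lam(v).\<close>
definition gen2 :: "nat \<Rightarrow> nat list \<Rightarrow> nat list \<Rightarrow> nat \<Rightarrow> cvec2" where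
  "gen2 c I Lam s = (\<Sum>m\<le>s. \<Sum>r\<le>m.
      Poly_Mapping.single ((I, r), (Lam, s - m)) (shiftcoef (of_nat c) r m))"

text \<open>Coefficient of u^{-s} in tilde f_{I|Lam}(u+c).\<close>
definition img :: "nat \<Rightarrow> nat list \<Rightarrow> nat list \<Rightarrow> nat \<Rightarrow> cvec" where
  "img c I Lam s = (\<Sum>r\<le>s. Poly_Mapping.map ((*) (shiftcoef (of_nat c) r s)) (fvec (I @ Lam) r))"

end

theory Submission
  imports Defs "HOL-Computational_Algebra.Formal_Power_Series" "HOL-Combinatorics.Multiset_Permutations"
begin

text \<open>Write \<open>c = d - p\<close>. Applying the coaction to \<open>f_I(u+c) \<otimes> f_\<Lambda>(u)\<close> and
  then \<open>\<mu>\<close> gives \<open>\<Sum>_{K,G} f_{K|G}(u+c) \<otimes> t^K_I(u+c) t^G_\<Lambda>(u)\<close>. Grouping the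
  terms by the sorted row set \<open>L\<close> of \<open>K|G\<close>, the coefficient of \<open>f_L(u+c)\<close>, signs
  included, is the Laplace expansion of the quantum minor \<open>t^L_{I|\<Lambda>}(u+c)\<close> along its
  first \<open>c\<close> columns: the shift \<open>u+c\<close> is exactly the shift carried by the later factors
  of that minor. The coaction of \<open>f_{I|\<Lambda>}(u+c)\<close> produces instead the minor with sorted
  columns. A quantum minor is antisymmetric in its rows by definition, but in its columns only
  modulo the defining relations: the relation
  \<open>(u - v)[t_ij(u), t_kl(v)] = t_kj(u) t_il(v) - t_kj(v) t_il(u)\<close> at \<open>u - v = 1\<close> makes
  two adjacent factors antisymmetric in their columns. Hence both sides agree in \<open>Y_n\<close>; when
  \<open>I|\<Lambda>\<close> has a repeated index, both vanish there.\<close>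

section \<open>Scalars and the ideal of relations\<close>

lemma yideal_mult_left: "a \<in> yideal n \<Longrightarrow> x * a \<in> yideal n"
  using yideal.mult[of a n x 1] by simp

lemma yideal_mult_right: "a \<in> yideal n \<Longrightarrow> a * y \<in> yideal n"
  using yideal.mult[of a n 1 y] by simp

lemma yideal_uminus: "a \<in> yideal n \<Longrightarrow> - a \<in> yideal n"
  using yideal_mult_left[of a n "-1"] by simp

lemma yideal_diff: "a \<in> yideal n \<Longrightarrow> b \<in> yideal n \<Longrightarrow> a - b \<in> yideal n"
  using yideal.add[OF _ yideal_uminus] by (simp only: diff_conv_add_uminus)

lemma yideal_sum: "(\<And>x. x \<in> A \<Longrightarrow> f x \<in> yideal n) \<Longrightarrow> sum f A \<in> yideal n"
  by (induction A rule: infinite_finite_induct) (simp_all add: yideal.zero yideal.add)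

lemma poly_mapping_sum_single_lookup:
  fixes w :: "'a \<Rightarrow>\<^sub>0 'b::comm_monoid_add"
  assumes "finite S" "Poly_Mapping.keys w \<subseteq> S"
  shows "(\<Sum>j\<in>S. Poly_Mapping.single j (Poly_Mapping.lookup w j)) = w"
proof (rule poly_mapping_eqI)
  fix k
  have "Poly_Mapping.lookup (\<Sum>j\<in>S. Poly_Mapping.single j (Poly_Mapping.lookup w j)) k
      = (\<Sum>j\<in>S. if j = k then Poly_Mapping.lookup w j else 0)"
    by (simp add: lookup_sum lookup_single when_def)
  also have "\<dots> = Poly_Mapping.lookup w k" using assms by (auto simp: in_keys_iff)
  finally show "Poly_Mapping.lookup (\<Sum>j\<in>S. Poly_Mapping.single j (Poly_Mapping.lookup w j)) k
      = Poly_Mapping.lookup w k" .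
qed

lemma yconst_0[simp]: "yconst 0 = 0" by (simp add: yconst_def)
lemma yconst_1[simp]: "yconst 1 = 1" by (simp add: yconst_def)
lemma yconst_add: "yconst (a + b) = yconst a + yconst b" by (simp add: yconst_def single_add)
lemma yconst_uminus: "yconst (- a) = - yconst a" by (simp add: yconst_def single_uminus)
lemma yconst_mult: "yconst (a * b) = yconst a * yconst b" by (simp add: yconst_def mult_single)

lemma yconst_sum: "yconst (sum f A) = (\<Sum>x\<in>A. yconst (f x))"
  by (induction A rule: infinite_finite_induct) (auto simp: yconst_add)

lemma yconst_power: "yconst (a ^ k) = yconst a ^ k"
  by (induction k) (simp_all add: yconst_mult)

lemma yconst_commute: "yconst c * x = x * yconst c"
proof -
  have single: "yconst c * Poly_Mapping.single w a = Poly_Mapping.single w a * yconst c" for w a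
    by (simp add: yconst_def mult_single mult.commute)
  show ?thesis
    by (subst (1 2) poly_mapping_sum_single_lookup[of "Poly_Mapping.keys x" x, symmetric])
      (simp_all add: sum_distrib_left sum_distrib_right single)
qed

lemma mult_yconst_left_commute: "x * (yconst c * y) = yconst c * (x * y)"
  by (metis mult.assoc yconst_commute)

lemma yconst_swap: "yconst a * (yconst b * x) = yconst b * (yconst a * x)"
  by (rule mult_yconst_left_commute)

lemma yconst_mult_mult: "(yconst c * x) * (yconst d * y) = yconst (c * d) * (x * y)"
  by (metis mult.assoc mult_yconst_left_commute yconst_mult)

lemma yconst_half_double: "yconst (1/2) * (x + x) = x"
proof -
  have "yconst (1/2) * (x + x) = (yconst (1/2) + yconst (1/2)) * x"
    by (simp only: distrib_left distrib_right)
  also have "\<dots> = x" by (simp only: yconst_add[symmetric]) simp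
  finally show ?thesis .
qed

lemma minus_one_power_yconst: "(- 1) ^ k * x = yconst ((- 1) ^ k) * x"
  by (simp add: yconst_power yconst_uminus)


section \<open>Shift coefficients\<close>

lemma sum_atMost_window:
  fixes f :: "nat \<Rightarrow> 'a::comm_monoid_add"
  assumes "b + N \<le> m" and "\<And>x. x \<le> m \<Longrightarrow> x < b \<or> b + N < x \<Longrightarrow> f x = 0"
  shows "(\<Sum>x\<le>m. f x) = (\<Sum>j\<le>N. f (b + j))"
proof -
  have "(\<Sum>x\<le>m. f x) = (\<Sum>x\<in>{0+b..N+b}. f x)"
    by (rule sum.mono_neutral_right) (use assms in auto)
  also have "\<dots> = (\<Sum>j\<in>{0..N}. f (j + b))"
    by (rule sum.shift_bounds_cl_nat_ivl)
  finally show ?thesis by (simp add: atLeast0AtMost add.commute)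
qed

lemma shiftcoef_eq_0: "m < r \<Longrightarrow> shiftcoef a r m = 0"
  by (simp add: shiftcoef_def)

lemma shiftcoef_convolution:
  "(\<Sum>x\<le>m. shiftcoef a b x * shiftcoef a q (m - x)) = shiftcoef a (b + q) m"
proof (cases "b + q \<le> m")
  case True
  define N where "N = m - b - q"
  have "(\<Sum>x\<le>m. shiftcoef a b x * shiftcoef a q (m - x))
      = (\<Sum>j\<le>N. shiftcoef a b (b + j) * shiftcoef a q (m - (b + j)))"
    by (rule sum_atMost_window) (use True in \<open>auto simp: N_def shiftcoef_def\<close>)
  also have "\<dots> = (\<Sum>j\<le>N. a ^ N * (((- of_nat b) gchoose j) * ((- of_nat q) gchoose (N - j))))"
  proof (intro sum.cong refl)
    fix j assume "j \<in> {..N}"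
    then have j: "j \<le> N" by simp
    have e: "m - (b + j) - q = N - j" using True by (simp add: N_def)
    have "a ^ j * a ^ (N - j) = a ^ N" using j by (simp add: power_add[symmetric])
    then show "shiftcoef a b (b + j) * shiftcoef a q (m - (b + j))
        = a ^ N * (((- of_nat b) gchoose j) * ((- of_nat q) gchoose (N - j)))"
      using True j unfolding shiftcoef_def e by (auto simp: N_def algebra_simps)
  qed
  also have "\<dots> = a ^ N * ((- of_nat b) + (- of_nat q) gchoose N)"
  proof -
    have V: "(\<Sum>j\<le>N. ((- of_nat b) gchoose j) * ((- of_nat q) gchoose (N - j))) = ((- of_nat b) + (- of_nat q) gchoose N :: complex)"
      using gbinomial_Vandermonde[of "- of_nat b :: complex" "- of_nat q" N] by (simp only: atLeast0AtMost)
    show ?thesis by (simp only: sum_distrib_left[symmetric] V)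
  qed
  also have "\<dots> = shiftcoef a (b + q) m"
    using True by (simp add: shiftcoef_def N_def algebra_simps)
  finally show ?thesis .
next
  case False
  then have "shiftcoef a b x * shiftcoef a q (m - x) = 0" if "x \<le> m" for x
    using that by (auto simp: shiftcoef_def)
  then have "(\<Sum>x\<le>m. shiftcoef a b x * shiftcoef a q (m - x)) = 0" by (intro sum.neutral) auto
  then show ?thesis using False by (simp add: shiftcoef_def)
qed

lemma shiftcoef_compose:
  "(\<Sum>x\<le>m. shiftcoef a x m * shiftcoef b r x) = shiftcoef (a + b) r m"
proof (cases "r \<le> m")
  case True
  define N where "N = m - r"
  have "(\<Sum>x\<le>m. shiftcoef a x m * shiftcoef b r x)
      = (\<Sum>j\<le>N. shiftcoef a (r + j) m * shiftcoef b r (r + j))"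
    by (rule sum_atMost_window) (use True in \<open>auto simp: N_def shiftcoef_def\<close>)
  also have "\<dots> = (\<Sum>j\<le>N. ((- of_nat r) gchoose N) * (of_nat (N choose j) * b ^ j * a ^ (N - j)))"
  proof (intro sum.cong refl)
    fix j assume "j \<in> {..N}"
    then have j: "j \<le> N" by simp
    have e: "m - (r + j) = N - j" by (simp add: N_def)
    have tri: "((- of_nat r) gchoose N) * (of_nat N gchoose j)
        = ((- of_nat r) gchoose j) * ((- of_nat r) - of_nat j gchoose (N - j) :: complex)"
      by (rule gbinomial_trinomial_revision) (use j in simp)
    have e2: "(- of_nat r) - of_nat j = (- of_nat (r + j) :: complex)" by simp
    have s1: "shiftcoef a (r + j) m = ((- of_nat (r + j)) gchoose (N - j)) * a ^ (N - j)"
      using True j unfolding shiftcoef_def e by (simp add: N_def)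
    have s2: "shiftcoef b r (r + j) = ((- of_nat r) gchoose j) * b ^ j"
      unfolding shiftcoef_def by simp
    have "shiftcoef a (r + j) m * shiftcoef b r (r + j)
        = (((- of_nat r) gchoose j) * ((- of_nat r) - of_nat j gchoose (N - j))) * (b ^ j * a ^ (N - j))"
      unfolding s1 s2 e2 by (simp only: mult_ac)
    also have "\<dots> = ((- of_nat r) gchoose N) * (of_nat N gchoose j) * (b ^ j * a ^ (N - j))"
      by (simp only: tri)
    finally show "shiftcoef a (r + j) m * shiftcoef b r (r + j)
        = ((- of_nat r) gchoose N) * (of_nat (N choose j) * b ^ j * a ^ (N - j))"
      by (simp add: binomial_gbinomial algebra_simps)
  qed
  also have "\<dots> = ((- of_nat r) gchoose N) * (b + a) ^ N"
    by (simp add: sum_distrib_left[symmetric] binomial_ring)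
  also have "\<dots> = shiftcoef (a + b) r m"
    using True by (simp add: shiftcoef_def N_def algebra_simps)
  finally show ?thesis .
next
  case False
  then have "shiftcoef a x m * shiftcoef b r x = 0" if "x \<le> m" for x
    using that by (auto simp: shiftcoef_def)
  then have "(\<Sum>x\<le>m. shiftcoef a x m * shiftcoef b r x) = 0" by (intro sum.neutral) auto
  then show ?thesis using False by (simp add: shiftcoef_def)
qed

lemma shiftcoef_0: "shiftcoef 0 r m = (if r = m then 1 else 0)"
  by (auto simp: shiftcoef_def)

lemma shiftcoef_order_0: "shiftcoef a 0 m = (if m = 0 then 1 else 0)"
  by (auto simp: shiftcoef_def gbinomial_0_left)


lemma shiftcoef_Suc_Suc: "shiftcoef a (Suc s) (Suc q) = shiftcoef a s q - a * shiftcoef a (Suc s) q"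
proof (cases "s \<le> q")
  case False
  then show ?thesis by (simp add: shiftcoef_def)
next
  case True
  then obtain N where q: "q = s + N" using le_Suc_ex by blast
  show ?thesis
  proof (cases N)
    case 0
    then show ?thesis using q by (simp add: shiftcoef_def)
  next
    case (Suc N')
    have P: "((- of_nat s :: complex) gchoose Suc N') = (- of_nat (Suc s) gchoose N') + (- of_nat (Suc s) gchoose Suc N')"
      using gbinomial_Suc_Suc[of "- of_nat (Suc s) :: complex" N'] by simp
    have e1: "shiftcoef a (Suc s) (Suc q) = (- of_nat (Suc s) gchoose Suc N') * a ^ Suc N'"
      using q Suc by (simp add: shiftcoef_def del: of_nat_Suc)
    have e2: "shiftcoef a s q = (- of_nat s gchoose Suc N') * a ^ Suc N'"
      using q Suc by (simp add: shiftcoef_def)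
    have e3: "shiftcoef a (Suc s) q = (- of_nat (Suc s) gchoose N') * a ^ N'"
      using q Suc by (simp add: shiftcoef_def del: of_nat_Suc)
    show ?thesis unfolding e1 e2 e3 P by (simp add: algebra_simps)
  qed
qed

section \<open>Formal series and their shifts\<close>

lemma sum_atMost_extend:
  fixes f :: "nat \<Rightarrow> 'a::comm_monoid_add"
  assumes "k \<le> n" "\<And>x. k < x \<Longrightarrow> x \<le> n \<Longrightarrow> f x = 0"
  shows "(\<Sum>x\<le>k. f x) = (\<Sum>x\<le>n. f x)"
  by (rule sum.mono_neutral_left) (use assms in auto)

lemma fps_nth_Abs_fps_fun[simp]: "fps_nth (Abs_fps f) = f"
  by (simp add: fun_eq_iff)

lemma ser_mult_fps: "ser_mult f g = fps_nth (Abs_fps f * Abs_fps g)"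
  by (simp add: ser_mult_def fps_mult_nth atLeast0AtMost fun_eq_iff)

lemma ser_one_fps: "ser_one = fps_nth 1"
  by (simp add: ser_one_def fun_eq_iff)

lemma ser_mult_assoc: "ser_mult (ser_mult f g) h = ser_mult f (ser_mult g h)"
  by (simp add: ser_mult_fps fps_nth_inverse mult.assoc)

lemma ser_mult_one_left[simp]: "ser_mult ser_one f = f"
  by (simp add: ser_mult_fps ser_one_fps fps_nth_inverse)

lemma ser_mult_add_left: "ser_mult (\<lambda>m. f m + g m) h = (\<lambda>m. ser_mult f h m + ser_mult g h m)"
  by (simp add: ser_mult_def fun_eq_iff distrib_right sum.distrib)

lemma ser_mult_add_right: "ser_mult h (\<lambda>m. f m + g m) = (\<lambda>m. ser_mult h f m + ser_mult h g m)"
  by (simp add: ser_mult_def fun_eq_iff distrib_left sum.distrib)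

lemma ser_mult_diff_left: "ser_mult (\<lambda>m. f m - g m) h = (\<lambda>m. ser_mult f h m - ser_mult g h m)"
  by (simp add: ser_mult_def fun_eq_iff left_diff_distrib sum_subtractf)

lemma ser_mult_diff_right: "ser_mult h (\<lambda>m. f m - g m) = (\<lambda>m. ser_mult h f m - ser_mult h g m)"
  by (simp add: ser_mult_def fun_eq_iff right_diff_distrib sum_subtractf)

lemma ser_mult_sum_left: "ser_mult (\<lambda>m. \<Sum>x\<in>A. F x m) h = (\<lambda>m. \<Sum>x\<in>A. ser_mult (F x) h m)"
  unfolding ser_mult_def fun_eq_iff sum_distrib_right by (intro allI sum.swap)

lemma ser_mult_sum_right: "ser_mult h (\<lambda>m. \<Sum>x\<in>A. F x m) = (\<lambda>m. \<Sum>x\<in>A. ser_mult h (F x) m)"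
  unfolding ser_mult_def fun_eq_iff sum_distrib_left by (intro allI sum.swap)

lemma ser_mult_scal_left: "ser_mult (\<lambda>m. yconst c * f m) g = (\<lambda>m. yconst c * ser_mult f g m)"
  by (simp add: ser_mult_def fun_eq_iff sum_distrib_left mult.assoc)

lemma ser_mult_scal_right: "ser_mult f (\<lambda>m. yconst c * g m) = (\<lambda>m. yconst c * ser_mult f g m)"
  by (simp add: ser_mult_def fun_eq_iff sum_distrib_left mult_yconst_left_commute)

lemma ser_mult_ideal_left: "(\<And>k. f k \<in> yideal n) \<Longrightarrow> ser_mult f g m \<in> yideal n"
  unfolding ser_mult_def by (intro yideal_sum yideal_mult_right) auto

lemma ser_mult_ideal_right: "(\<And>k. g k \<in> yideal n) \<Longrightarrow> ser_mult f g m \<in> yideal n"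
  unfolding ser_mult_def by (intro yideal_sum yideal_mult_left) auto

lemma ser_prod_list_Cons: "ser_prod_list (x # xs) = ser_mult x (ser_prod_list xs)"
  by (simp add: ser_prod_list_def)

lemma ser_prod_list_Nil: "ser_prod_list [] = ser_one"
  by (simp add: ser_prod_list_def)

lemma ser_prod_list_append: "ser_prod_list (xs @ ys) = ser_mult (ser_prod_list xs) (ser_prod_list ys)"
  by (induction xs) (simp_all add: ser_prod_list_Cons ser_prod_list_Nil ser_mult_assoc)

lemma ser_shift_add: "ser_shift a (\<lambda>m. f m + g m) = (\<lambda>m. ser_shift a f m + ser_shift a g m)"
  by (simp add: ser_shift_def fun_eq_iff distrib_left sum.distrib)

lemma ser_shift_diff: "ser_shift a (\<lambda>m. f m - g m) = (\<lambda>m. ser_shift a f m - ser_shift a g m)"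
  by (simp add: ser_shift_def fun_eq_iff right_diff_distrib sum_subtractf)

lemma ser_shift_sum: "ser_shift a (\<lambda>m. \<Sum>x\<in>A. F x m) = (\<lambda>m. \<Sum>x\<in>A. ser_shift a (F x) m)"
  unfolding ser_shift_def fun_eq_iff sum_distrib_left by (intro allI sum.swap)

lemma ser_shift_scal: "ser_shift a (\<lambda>m. yconst c * f m) = (\<lambda>m. yconst c * ser_shift a f m)"
  unfolding ser_shift_def fun_eq_iff sum_distrib_left yconst_swap[of _ c] by simp

lemma ser_shift_ideal: "(\<And>k. f k \<in> yideal n) \<Longrightarrow> ser_shift a f m \<in> yideal n"
  unfolding ser_shift_def by (intro yideal_sum yideal_mult_left) auto

lemma ser_shift_zero: "ser_shift 0 f = f"
proof
  fix m
  have "ser_shift 0 f m = (\<Sum>r\<le>m. if r = m then f r else 0)"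
    unfolding ser_shift_def shiftcoef_0 by (intro sum.cong) auto
  then show "ser_shift 0 f m = f m" by simp
qed

lemma ser_shift_one: "ser_shift a ser_one = ser_one"
proof
  fix m
  have "ser_shift a ser_one m = (\<Sum>r\<le>m. if r = 0 then yconst (shiftcoef a 0 m) else 0)"
    unfolding ser_shift_def ser_one_def by (intro sum.cong) auto
  then show "ser_shift a ser_one m = ser_one m" by (simp add: shiftcoef_order_0 ser_one_def)
qed

lemma ser_shift_shift: "ser_shift a (ser_shift b f) = ser_shift (a + b) f"
proof
  fix m
  have "ser_shift a (ser_shift b f) m
      = (\<Sum>x\<le>m. yconst (shiftcoef a x m) * (\<Sum>r\<le>m. yconst (shiftcoef b r x) * f r))"
    unfolding ser_shift_def
    by (intro sum.cong refl arg_cong2[where f="(*)"] sum_atMost_extend) (auto simp: shiftcoef_eq_0)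
  also have "\<dots> = (\<Sum>x\<le>m. \<Sum>r\<le>m. yconst (shiftcoef a x m * shiftcoef b r x) * f r)"
    by (simp only: sum_distrib_left yconst_mult mult.assoc)
  also have "\<dots> = (\<Sum>r\<le>m. \<Sum>x\<le>m. yconst (shiftcoef a x m * shiftcoef b r x) * f r)"
    by (rule sum.swap)
  also have "\<dots> = (\<Sum>r\<le>m. yconst (\<Sum>x\<le>m. shiftcoef a x m * shiftcoef b r x) * f r)"
    by (simp only: sum_distrib_right yconst_sum)
  also have "\<dots> = ser_shift (a + b) f m"
    by (simp add: shiftcoef_compose ser_shift_def)
  finally show "ser_shift a (ser_shift b f) m = ser_shift (a + b) f m" .
qed

lemma ser_shift_mult: "ser_shift a (ser_mult f g) = ser_mult (ser_shift a f) (ser_shift a g)"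
proof
  fix m
  define G where "G i j = yconst (shiftcoef a (i + j) m) * (f i * g j)" for i j
  have "ser_shift a (ser_mult f g) m = (\<Sum>k\<le>m. \<Sum>i\<le>k. G i (k - i))"
    unfolding ser_shift_def ser_mult_def G_def sum_distrib_left
    by (intro sum.cong refl) simp
  also have "\<dots> = (\<Sum>(i,j)\<in>{(i,j). i + j \<le> m}. G i j)"
    by (rule sum.triangle_reindex_eq[symmetric])
  also have "\<dots> = (\<Sum>(i,j)\<in>{..m} \<times> {..m}. G i j)"
    by (rule sum.mono_neutral_left) (auto simp: G_def shiftcoef_def split: if_splits)
  also have "\<dots> = (\<Sum>i\<le>m. \<Sum>j\<le>m. G i j)"
    by (simp add: sum.cartesian_product)
  also have "\<dots> = (\<Sum>i\<le>m. \<Sum>j\<le>m. yconst (\<Sum>x\<le>m. shiftcoef a i x * shiftcoef a j (m - x)) * (f i * g j))"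
    by (simp add: G_def shiftcoef_convolution)
  also have "\<dots> = (\<Sum>i\<le>m. \<Sum>j\<le>m. \<Sum>x\<le>m. yconst (shiftcoef a i x * shiftcoef a j (m - x)) * (f i * g j))"
    by (simp only: yconst_sum sum_distrib_right)
  also have "\<dots> = (\<Sum>i\<le>m. \<Sum>x\<le>m. \<Sum>j\<le>m. yconst (shiftcoef a i x * shiftcoef a j (m - x)) * (f i * g j))"
    by (intro sum.cong refl sum.swap)
  also have "\<dots> = (\<Sum>x\<le>m. \<Sum>i\<le>m. \<Sum>j\<le>m. yconst (shiftcoef a i x * shiftcoef a j (m - x)) * (f i * g j))"
    by (rule sum.swap)
  also have "\<dots> = (\<Sum>x\<le>m. \<Sum>j\<le>m. \<Sum>i\<le>m. yconst (shiftcoef a i x * shiftcoef a j (m - x)) * (f i * g j))"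
    by (intro sum.cong refl sum.swap)
  also have "\<dots> = (\<Sum>x\<le>m. (\<Sum>i\<le>m. yconst (shiftcoef a i x) * f i) * (\<Sum>j\<le>m. yconst (shiftcoef a j (m - x)) * g j))"
    by (simp only: sum_distrib_right sum_distrib_left yconst_mult_mult)
  also have "\<dots> = ser_mult (ser_shift a f) (ser_shift a g) m"
    unfolding ser_mult_def ser_shift_def
    by (intro sum.cong refl arg_cong2[where f="(*)"] sum_atMost_extend[symmetric]) (auto simp: shiftcoef_eq_0)
  finally show "ser_shift a (ser_mult f g) m = ser_mult (ser_shift a f) (ser_shift a g) m" .
qed

lemma ser_shift_prod_list: "ser_shift a (ser_prod_list xs) = ser_prod_list (map (ser_shift a) xs)"
  by (induction xs) (simp_all add: ser_prod_list_Cons ser_prod_list_Nil ser_shift_mult ser_shift_one)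





section \<open>Inversions and signs\<close>

definition swap_adj :: "'a list \<Rightarrow> nat \<Rightarrow> 'a list" where
  "swap_adj xs k = xs[k := xs ! Suc k, Suc k := xs ! k]"

lemma swap_adj_length[simp]: "length (swap_adj xs k) = length xs"
  by (simp add: swap_adj_def)

lemma swap_adj_nth:
  assumes "Suc k < length xs" "i < length xs"
  shows "swap_adj xs k ! i = xs ! (Transposition.transpose k (Suc k) i)"
  using assms by (auto simp: swap_adj_def nth_list_update transpose_def)

lemma swap_adj_nth_other: "i \<noteq> k \<Longrightarrow> i \<noteq> Suc k \<Longrightarrow> swap_adj xs k ! i = xs ! i"
  by (simp add: swap_adj_def)

lemma swap_adj_nth_k: "Suc k < length xs \<Longrightarrow> swap_adj xs k ! k = xs ! Suc k"
  by (simp add: swap_adj_def nth_list_update)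

lemma swap_adj_nth_Suc_k: "Suc k < length xs \<Longrightarrow> swap_adj xs k ! Suc k = xs ! k"
  by (simp add: swap_adj_def)

lemma swap_adj_swap_adj: "Suc k < length xs \<Longrightarrow> swap_adj (swap_adj xs k) k = xs"
  by (rule nth_equalityI) (auto simp: swap_adj_nth transpose_def)

lemma swap_adj_mset: "Suc k < length xs \<Longrightarrow> mset (swap_adj xs k) = mset xs"
  unfolding swap_adj_def by (rule mset_swap) auto

lemma swap_adj_set: "Suc k < length xs \<Longrightarrow> set (swap_adj xs k) = set xs"
  by (metis swap_adj_mset set_mset_mset)

lemma swap_adj_distinct: "Suc k < length xs \<Longrightarrow> distinct (swap_adj xs k) = distinct xs"
  by (metis swap_adj_mset distinct_count_atmost_1 set_mset_mset)

lemma swap_adj_append_left: "Suc k < length xs \<Longrightarrow> swap_adj xs k @ ys = swap_adj (xs @ ys) k"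
  by (simp add: swap_adj_def nth_append list_update_append)

lemma swap_adj_append_right:
  "Suc k < length ys \<Longrightarrow> xs @ swap_adj ys k = swap_adj (xs @ ys) (length xs + k)"
  by (simp add: swap_adj_def nth_append list_update_append)

definition inversions :: "nat list \<Rightarrow> (nat \<times> nat) set" where
  "inversions xs = {(i, j). i < j \<and> j < length xs \<and> xs ! j < xs ! i}"

lemma ninv_eq_card_inversions: "ninv xs = card (inversions xs)"
  by (simp add: ninv_def inversions_def)

lemma finite_inversions[simp]: "finite (inversions xs)"
proof -
  have "inversions xs \<subseteq> {..<length xs} \<times> {..<length xs}" by (auto simp: inversions_def)
  then show ?thesis by (rule finite_subset) simp
qed

lemma ninv_sorted: "sorted xs \<Longrightarrow> ninv xs = 0"
proof -
  assume s: "sorted xs"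
  have "\<not> xs ! j < xs ! i" if "i < j" "j < length xs" for i j
    using sorted_nth_mono[OF s, of i j] that by simp
  then have "inversions xs = {}" by (auto simp: inversions_def)
  then show ?thesis by (simp add: ninv_eq_card_inversions)
qed

lemma ninv_map_mono:
  assumes "strict_mono_on A g" "set xs \<subseteq> A"
  shows "ninv (map g xs) = ninv xs"
proof -
  have "inversions (map g xs) = inversions xs"
    using assms strict_mono_on_less[OF assms(1)] by (auto simp: inversions_def subset_iff)
  then show ?thesis by (simp add: ninv_eq_card_inversions)
qed

lemma inversions_swap_adj:
  assumes k: "Suc k < length xs" and d: "xs ! Suc k < xs ! k"
  defines "t \<equiv> Transposition.transpose k (Suc k)"
  shows "(\<lambda>(i, j). (t i, t j)) ` inversions (swap_adj xs k) = inversions xs - {(k, Suc k)}"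
proof (intro equalityI subsetI)
  have ys: "swap_adj xs k ! i = xs ! t i" if "i < length xs" for i
    unfolding t_def using swap_adj_nth[OF k that] .
  have tl: "t i < length xs \<longleftrightarrow> i < length xs" for i using k by (auto simp: t_def transpose_def)
  have tmono: "t i < t j" if "i < j" "(i, j) \<noteq> (k, Suc k)" for i j
    using that by (auto simp: t_def transpose_def)
  {
    fix p assume "p \<in> (\<lambda>(i, j). (t i, t j)) ` inversions (swap_adj xs k)"
    then obtain i j where p: "p = (t i, t j)"
      and ij: "i < j" "j < length xs" "swap_adj xs k ! j < swap_adj xs k ! i"
      by (auto simp: inversions_def)
    have "(i, j) \<noteq> (k, Suc k)" using ij(3) d k ys[of k] ys[of "Suc k"] by (auto simp: t_def)
    moreover have "(t i, t j) \<noteq> (k, Suc k)"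
      using ij(1) by (auto simp: t_def transpose_def split: if_splits)
    ultimately show "p \<in> inversions xs - {(k, Suc k)}"
      using p ij tl ys tmono by (auto simp: inversions_def)
  next
    fix p assume "p \<in> inversions xs - {(k, Suc k)}"
    then obtain a b where p: "p = (a, b)"
      and ab: "a < b" "b < length xs" "xs ! b < xs ! a" "(a, b) \<noteq> (k, Suc k)"
      by (auto simp: inversions_def)
    have "(t a, t b) \<in> inversions (swap_adj xs k)"
      using tmono[OF ab(1) ab(4)] ab ys tl by (auto simp: inversions_def t_def)
    moreover have "p = (t (t a), t (t b))" using p by (simp add: t_def)
    ultimately show "p \<in> (\<lambda>(i, j). (t i, t j)) ` inversions (swap_adj xs k)" by force
  }
qed

lemma ninv_swap_adj:
  assumes k: "Suc k < length xs" and d: "xs ! Suc k < xs ! k"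
  shows "ninv xs = Suc (ninv (swap_adj xs k))"
proof -
  let ?t = "Transposition.transpose k (Suc k)"
  have "inj (\<lambda>(i, j). (?t i, ?t j))"
    by (rule injI) (auto simp: transpose_eq_iff)
  then have "ninv (swap_adj xs k) = card (inversions xs - {(k, Suc k)})"
    by (metis (no_types, lifting) inversions_swap_adj[OF k d] card_image inj_on_subset
        ninv_eq_card_inversions subset_UNIV)
  moreover have "(k, Suc k) \<in> inversions xs" using k d by (simp add: inversions_def)
  ultimately show ?thesis
    by (metis card_Suc_Diff1 finite_inversions ninv_eq_card_inversions)
qed

lemma sort_sign_congruence:
  fixes f :: "nat list \<Rightarrow> 'a::ring_1"
  assumes Z0: "0 \<in> Z" and Zadd: "\<And>x y. x \<in> Z \<Longrightarrow> y \<in> Z \<Longrightarrow> x + y \<in> Z"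
    and Zneg: "\<And>x. x \<in> Z \<Longrightarrow> - x \<in> Z"
    and swap: "\<And>xs k. Suc k < length xs \<Longrightarrow> xs ! Suc k < xs ! k \<Longrightarrow> f (swap_adj xs k) + f xs \<in> Z"
  shows "f (sort xs) - (- 1) ^ ninv xs * f xs \<in> Z"
proof (induction "ninv xs" arbitrary: xs rule: less_induct)
  case less
  show ?case
  proof (cases "sorted xs")
    case True
    then show ?thesis using Z0 by (simp add: ninv_sorted sorted_sort_id)
  next
    case False
    then obtain k where k: "Suc k < length xs" "xs ! Suc k < xs ! k"
      by (auto simp: sorted_iff_nth_Suc not_le)
    let ?ys = "swap_adj xs k"
    have n: "ninv xs = Suc (ninv ?ys)" by (rule ninv_swap_adj[OF k])
    have "sort ?ys = sort xs" by (rule properties_for_sort) (simp_all add: swap_adj_mset[OF k(1)])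
    then have IH: "f (sort xs) - (- 1) ^ ninv ?ys * f ?ys \<in> Z"
      using less[of ?ys] n by simp
    have step: "(- 1) ^ ninv ?ys * (f ?ys + f xs) \<in> Z"
      using swap[OF k] Zneg[OF swap[OF k]] by (cases "even (ninv ?ys)") simp_all
    have "f (sort xs) - (- 1) ^ ninv xs * f xs
        = (f (sort xs) - (- 1) ^ ninv ?ys * f ?ys) + (- 1) ^ ninv ?ys * (f ?ys + f xs)"
      by (simp add: n algebra_simps)
    then show ?thesis using Zadd[OF IH step] by (simp only:)
  qed
qed

lemma sort_sign_eq:
  fixes f :: "nat list \<Rightarrow> 'a::ring_1"
  assumes "\<And>xs k. Suc k < length xs \<Longrightarrow> xs ! Suc k < xs ! k \<Longrightarrow> f (swap_adj xs k) = - f xs"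
  shows "f (sort xs) = (- 1) ^ ninv xs * f xs"
  using sort_sign_congruence[of "{0}" f xs] assms by simp

lemma minus_one_power_ninv_swap_adj:
  assumes "Suc k < length xs" "xs ! Suc k < xs ! k"
  shows "(- 1 :: 'a::ring_1) ^ ninv (swap_adj xs k) = - ((- 1) ^ ninv xs)"
  by (simp add: ninv_swap_adj[OF assms])

lemma minus_one_power_ninv_swap_adj_distinct:
  assumes "distinct xs" "Suc k < length xs"
  shows "(- 1 :: 'a::ring_1) ^ ninv (swap_adj xs k) = - ((- 1) ^ ninv xs)"
proof (cases "xs ! Suc k < xs ! k")
  case True
  then show ?thesis by (rule minus_one_power_ninv_swap_adj[OF assms(2)])
next
  case False
  let ?ys = "swap_adj xs k"
  have "xs ! Suc k \<noteq> xs ! k" using assms by (simp add: nth_eq_iff_index_eq)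
  then have "?ys ! Suc k < ?ys ! k" using False assms by (simp add: swap_adj_nth_k swap_adj_nth_Suc_k)
  moreover have "Suc k < length ?ys" using assms by simp
  ultimately have "(- 1 :: 'a) ^ ninv (swap_adj ?ys k) = - ((- 1) ^ ninv ?ys)"
    using minus_one_power_ninv_swap_adj by blast
  then show ?thesis using swap_adj_swap_adj[OF assms(2)] by simp
qed

lemma minus_one_power_ninv_append:
  "(- 1 :: 'a::comm_ring_1) ^ ninv (R1 @ R2)
     = (- 1) ^ ninv (sort R1 @ sort R2) * (- 1) ^ ninv R1 * (- 1) ^ ninv R2"
proof -
  have sort1: "(- 1 :: 'a) ^ ninv (sort R1 @ R2) = (- 1) ^ ninv R1 * (- 1) ^ ninv (R1 @ R2)"
  proof (rule sort_sign_eq[where f = "\<lambda>xs. (- 1) ^ ninv (xs @ R2)"])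
    fix xs :: "nat list" and k assume k: "Suc k < length xs" "xs ! Suc k < xs ! k"
    show "(- 1 :: 'a) ^ ninv (swap_adj xs k @ R2) = - ((- 1) ^ ninv (xs @ R2))"
      unfolding swap_adj_append_left[OF k(1)]
      by (rule minus_one_power_ninv_swap_adj) (use k in \<open>simp_all add: nth_append\<close>)
  qed
  have sort2: "(- 1 :: 'a) ^ ninv (sort R1 @ sort R2) = (- 1) ^ ninv R2 * (- 1) ^ ninv (sort R1 @ R2)"
  proof (rule sort_sign_eq[where f = "\<lambda>ys. (- 1) ^ ninv (sort R1 @ ys)"])
    fix ys :: "nat list" and k assume k: "Suc k < length ys" "ys ! Suc k < ys ! k"
    show "(- 1 :: 'a) ^ ninv (sort R1 @ swap_adj ys k) = - ((- 1) ^ ninv (sort R1 @ ys))"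
      unfolding swap_adj_append_right[OF k(1)]
      by (rule minus_one_power_ninv_swap_adj) (use k in \<open>simp_all add: nth_append\<close>)
  qed
  have square: "(- 1 :: 'a) ^ m * (- 1) ^ m = 1" for m
    by (simp flip: power_add)
  have "(- 1 :: 'a) ^ ninv R2 * ((- 1) ^ ninv R1 * (- 1) ^ ninv (R1 @ R2)) * (- 1) ^ ninv R1 * (- 1) ^ ninv R2
      = (- 1) ^ ninv (R1 @ R2) * ((- 1) ^ ninv R1 * (- 1) ^ ninv R1) * ((- 1) ^ ninv R2 * (- 1) ^ ninv R2)"
    by (simp only: ac_simps)
  then show ?thesis unfolding sort2 sort1 by (simp add: square)
qed

definition perm_of_list :: "nat list \<Rightarrow> nat \<Rightarrow> nat" where
  "perm_of_list xs i = (if i < length xs then xs ! i else i)"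

lemma perm_of_list_permutes:
  assumes "distinct xs" "set xs = {..<length xs}"
  shows "perm_of_list xs permutes {..<length xs}"
proof (rule bij_imp_permutes)
  have "bij_betw ((!) xs) {..<length xs} {..<length xs}"
    using bij_betw_nth[OF assms(1) refl] assms(2) by simp
  then show "bij_betw (perm_of_list xs) {..<length xs} {..<length xs}"
    by (rule bij_betw_cong[THEN iffD1, rotated]) (simp add: perm_of_list_def)
  show "\<And>x. x \<notin> {..<length xs} \<Longrightarrow> perm_of_list xs x = x" by (simp add: perm_of_list_def)
qed

lemma perm_of_list_swap_adj:
  assumes "Suc k < length xs"
  shows "perm_of_list (swap_adj xs k) = perm_of_list xs \<circ> Transposition.transpose k (Suc k)"
proof
  fix i
  show "perm_of_list (swap_adj xs k) i = (perm_of_list xs \<circ> Transposition.transpose k (Suc k)) i"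
  proof (cases "i < length xs")
    case True
    have "Transposition.transpose k (Suc k) i < length xs" using True assms by (auto simp: transpose_def)
    then show ?thesis using True swap_adj_nth[OF assms True] by (simp add: perm_of_list_def)
  next
    case False
    then have "Transposition.transpose k (Suc k) i = i" using assms by (auto simp: transpose_def)
    then show ?thesis using False by (simp add: perm_of_list_def)
  qed
qed

lemma sign_eq_ninv:
  assumes perm: "\<sigma> permutes {..<d}"
  shows "sign \<sigma> = (- 1 :: int) ^ ninv (map \<sigma> [0..<d])"
proof -
  define f where "f xs = (if distinct xs \<and> set xs = {..<length xs} then sign (perm_of_list xs) else (0::int))" for xs
  have sorted: "f (sort xs) = (- 1) ^ ninv xs * f xs" for xs
  proof (rule sort_sign_eq)
    fix xs :: "nat list" and k assume k: "Suc k < length xs"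
    show "f (swap_adj xs k) = - f xs"
    proof (cases "distinct xs \<and> set xs = {..<length xs}")
      case True
      then have "permutation (perm_of_list xs)"
        using perm_of_list_permutes[of xs] permutes_imp_permutation by blast
      then have "sign (perm_of_list (swap_adj xs k)) = - sign (perm_of_list xs)"
        unfolding perm_of_list_swap_adj[OF k]
        by (simp add: sign_compose permutation_swap_id sign_swap_id)
      then show ?thesis using True k by (simp add: f_def swap_adj_distinct swap_adj_set)
    qed (use k in \<open>auto simp add: f_def swap_adj_distinct swap_adj_set\<close>)
  qed
  let ?xs = "map \<sigma> [0..<d]"
  have dist: "distinct ?xs" using permutes_inj_on[OF perm] by (simp add: distinct_map)
  have set: "set ?xs = {..<d}" using permutes_image[OF perm] by (simp add: atLeast0LessThan)
  have "mset [0..<d] = mset ?xs"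
    using set_eq_iff_mset_eq_distinct[of "[0..<d]" ?xs] dist set by (simp add: atLeast0LessThan)
  then have "sort ?xs = [0..<d]"
    by (rule properties_for_sort) simp
  moreover have "perm_of_list [0..<d] = id" by (auto simp: perm_of_list_def fun_eq_iff)
  moreover have "perm_of_list ?xs = \<sigma>"
    using permutes_not_in[OF perm] by (auto simp: perm_of_list_def fun_eq_iff)
  ultimately have "1 = (- 1) ^ ninv ?xs * sign \<sigma>"
    using sorted[of ?xs] dist set by (simp add: f_def atLeast0LessThan)
  then show ?thesis by (auto simp: minus_one_power_iff split: if_splits)
qed


section \<open>The defining relation at shift one\<close>

lemma ser_mult_shift_right_expand:
  "ser_mult f (ser_shift a g) m
     = (\<Sum>r\<le>m. \<Sum>s\<le>m. yconst (shiftcoef a s (m - r)) * (f r * g s))"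
proof -
  have "ser_mult f (ser_shift a g) m
      = (\<Sum>r\<le>m. f r * (\<Sum>s\<le>m. yconst (shiftcoef a s (m - r)) * g s))"
    unfolding ser_mult_def ser_shift_def
    by (intro sum.cong refl arg_cong2[where f="(*)"] sum_atMost_extend) (auto simp: shiftcoef_eq_0)
  then show ?thesis
    by (simp add: sum_distrib_left mult_yconst_left_commute)
qed

lemma ser_mult_shift_left_expand:
  "ser_mult (ser_shift a g) f m
     = (\<Sum>r\<le>m. \<Sum>s\<le>m. yconst (shiftcoef a s (m - r)) * (g s * f r))"
proof -
  have "ser_mult (ser_shift a g) f m = (\<Sum>r\<le>m. ser_shift a g (m - r) * f (m - (m - r)))"
    unfolding ser_mult_def using sum.atLeastAtMost_rev[of "\<lambda>r. ser_shift a g r * f (m - r)" 0 m]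
    by (simp add: atLeast0AtMost)
  also have "\<dots> = (\<Sum>r\<le>m. (\<Sum>s\<le>m. yconst (shiftcoef a s (m - r)) * g s) * f r)"
    unfolding ser_shift_def
    by (intro sum.cong refl arg_cong2[where f="(*)"] sum_atMost_extend) (auto simp: shiftcoef_eq_0)
  finally show ?thesis
    by (simp add: sum_distrib_right mult.assoc)
qed

lemma sum_atMost_Suc_shift:
  fixes F :: "nat \<Rightarrow> 'a::comm_monoid_add"
  assumes "F 0 = 0" "F (Suc m) = 0"
  shows "(\<Sum>r\<le>m. F (Suc r)) = (\<Sum>r\<le>m. F r)"
  using sum.atMost_Suc_shift[of F m] assms by simp

text \<open>Summation by parts against the coefficients of \<open>(u - 1)\<^sup>-\<^sup>s\<close>; their Pascal
  recursion \<open>shiftcoef_Suc_Suc\<close> turns \<open>[t(u), t(u-1)]\<close> into the difference of the two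
  index shifts occurring in the defining relation.\<close>

lemma shift_one_summation_by_parts:
  fixes A :: "nat \<Rightarrow> nat \<Rightarrow> fyang" and m :: nat
  assumes A0: "\<And>s. A 0 s = 0" "\<And>r. A r 0 = 0"
  defines "c r s \<equiv> yconst (shiftcoef (- 1) s (m - r))"
  shows "(\<Sum>r\<le>m. \<Sum>s\<le>m. c r s * A r s)
       = (\<Sum>r\<le>m. \<Sum>s\<le>m. c r s * A (Suc r) s) - (\<Sum>r\<le>m. \<Sum>s\<le>m. c r s * A r (Suc s))"
proof -
  have shift_r: "(\<Sum>r\<le>m. \<Sum>s\<le>m. c r s * A (Suc r) s) = (\<Sum>r\<le>m. \<Sum>s\<le>m. c (r - 1) s * A r s)"
  proof -
    define F where "F r = (\<Sum>s\<le>m. c (r - 1) s * A r s)" for r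
    have "(\<Sum>r\<le>m. F (Suc r)) = (\<Sum>r\<le>m. F r)"
      by (rule sum_atMost_Suc_shift) (auto simp: F_def A0 c_def shiftcoef_def intro!: sum.neutral)
    then show ?thesis by (simp add: F_def)
  qed
  have shift_s: "(\<Sum>s\<le>m. c r s * A r (Suc s)) = (\<Sum>s\<le>m. c r (s - 1) * A r s)" if "r \<le> m" for r
  proof -
    define F where "F s = c r (s - 1) * A r s" for s
    have "F (Suc m) = 0"
    proof (cases "r = 0")
      case False
      then have "\<not> m \<le> m - r" using that by arith
      then show ?thesis by (simp add: F_def c_def shiftcoef_def)
    qed (simp add: F_def A0)
    then have "(\<Sum>s\<le>m. F (Suc s)) = (\<Sum>s\<le>m. F s)"
      by (intro sum_atMost_Suc_shift) (simp_all add: F_def A0)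
    then show ?thesis by (simp add: F_def)
  qed
  have pascal: "c r s * A r s = c (r - 1) s * A r s - c r (s - 1) * A r s" if "r \<le> m" for r s
  proof (cases "r = 0 \<or> s = 0")
    case False
    then obtain r' s' where rs: "r = Suc r'" "s = Suc s'" by (metis not0_implies_Suc)
    have "m - r' = Suc (m - r)" using that rs by simp
    then have "c (r - 1) s - c r (s - 1) = c r s"
      using shiftcoef_Suc_Suc[of "- 1" s' "m - r"] rs by (simp add: c_def yconst_add)
    then show ?thesis by (simp add: left_diff_distrib[symmetric])
  qed (use A0 in auto)
  have "(\<Sum>r\<le>m. \<Sum>s\<le>m. c r s * A r s)
      = (\<Sum>r\<le>m. \<Sum>s\<le>m. c (r - 1) s * A r s) - (\<Sum>r\<le>m. \<Sum>s\<le>m. c r (s - 1) * A r s)"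
    by (simp add: pascal sum_subtractf)
  then show ?thesis by (simp add: shift_r shift_s)
qed

lemma tgen_0_commute: "tgen i j 0 * x = x * tgen i j 0"
  by (simp add: tgen_def)

lemma yangian_relation_shift_one:
  assumes "i \<in> {1..n}" "j \<in> {1..n}" "k \<in> {1..n}" "l \<in> {1..n}"
  shows "ser_mult (tser i j) (ser_shift (- 1) (tser k l)) m - ser_mult (ser_shift (- 1) (tser k l)) (tser i j) m
        - (ser_mult (tser k j) (ser_shift (- 1) (tser i l)) m - ser_mult (ser_shift (- 1) (tser k j)) (tser i l) m)
        \<in> yideal n"
proof -
  define c where "c r s = yconst (shiftcoef (- 1) s (m - r))" for r s
  define A where "A r s = tgen i j r * tgen k l s - tgen k l s * tgen i j r" for r s
  have "ser_mult (tser i j) (ser_shift (- 1) (tser k l)) m - ser_mult (ser_shift (- 1) (tser k l)) (tser i j) m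
        - (ser_mult (tser k j) (ser_shift (- 1) (tser i l)) m - ser_mult (ser_shift (- 1) (tser k j)) (tser i l) m)
      = (\<Sum>r\<le>m. \<Sum>s\<le>m. c r s * A r s)
        - (\<Sum>r\<le>m. \<Sum>s\<le>m. c r s * (tgen k j r * tgen i l s - tgen k j s * tgen i l r))"
    unfolding ser_mult_shift_right_expand ser_mult_shift_left_expand c_def A_def tser_def
    by (simp add: sum_subtractf right_diff_distrib)
  also have "(\<Sum>r\<le>m. \<Sum>s\<le>m. c r s * A r s)
      = (\<Sum>r\<le>m. \<Sum>s\<le>m. c r s * A (Suc r) s) - (\<Sum>r\<le>m. \<Sum>s\<le>m. c r s * A r (Suc s))"
    unfolding c_def by (rule shift_one_summation_by_parts) (simp_all add: A_def tgen_0_commute)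
  also have "\<dots> - (\<Sum>r\<le>m. \<Sum>s\<le>m. c r s * (tgen k j r * tgen i l s - tgen k j s * tgen i l r))
      = (\<Sum>r\<le>m. \<Sum>s\<le>m. c r s * yrel i j k l r s)"
    by (simp add: A_def yrel_def sum_subtractf right_diff_distrib)
  also have "\<dots> \<in> yideal n"
    using assms by (intro yideal_sum yideal_mult_left yideal.rel) auto
  finally show ?thesis .
qed

definition tshift :: "nat \<Rightarrow> nat \<Rightarrow> nat \<Rightarrow> yser" where
  "tshift k i j = ser_shift (- of_nat k) (tser i j)"

lemma ser_shift_minus_Suc: "ser_shift (- of_nat k) (ser_shift (- 1) f) = ser_shift (- of_nat (Suc k)) f"
proof -
  have "(- of_nat k + - 1 :: complex) = - of_nat (Suc k)" by simp
  then show ?thesis by (simp only: ser_shift_shift)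
qed

text \<open>The 2\<times>2 minor with rows \<open>a, b\<close> is antisymmetric in its columns \<open>j, j'\<close>
  modulo the relations; it is the sum of two instances of the relation at shift one.\<close>

lemma adjacent_factors_antisym:
  assumes "a \<in> {1..n}" "b \<in> {1..n}" "j \<in> {1..n}" "j' \<in> {1..n}"
  shows "ser_mult (tshift k a j) (tshift (Suc k) b j') m - ser_mult (tshift k b j) (tshift (Suc k) a j') m
       + ser_mult (tshift k a j') (tshift (Suc k) b j) m - ser_mult (tshift k b j') (tshift (Suc k) a j) m
       \<in> yideal n"
proof -
  define X where "X = (\<lambda>m. ser_mult (tser a j) (ser_shift (- 1) (tser b j')) m
      - ser_mult (tser b j) (ser_shift (- 1) (tser a j')) m
      + ser_mult (tser a j') (ser_shift (- 1) (tser b j)) m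
      - ser_mult (tser b j') (ser_shift (- 1) (tser a j)) m)"
  have "X q \<in> yideal n" for q
  proof -
    have "X q = (ser_mult (tser a j) (ser_shift (- 1) (tser b j')) q - ser_mult (ser_shift (- 1) (tser b j')) (tser a j) q
        - (ser_mult (tser b j) (ser_shift (- 1) (tser a j')) q - ser_mult (ser_shift (- 1) (tser b j)) (tser a j') q))
      + (ser_mult (tser a j') (ser_shift (- 1) (tser b j)) q - ser_mult (ser_shift (- 1) (tser b j)) (tser a j') q
        - (ser_mult (tser b j') (ser_shift (- 1) (tser a j)) q - ser_mult (ser_shift (- 1) (tser b j')) (tser a j) q))"
      by (simp add: X_def algebra_simps)
    also have "\<dots> \<in> yideal n"
      by (intro yideal.add yangian_relation_shift_one) (use assms in auto)
    finally show ?thesis .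
  qed
  moreover have "ser_mult (tshift k a j) (tshift (Suc k) b j') m - ser_mult (tshift k b j) (tshift (Suc k) a j') m
       + ser_mult (tshift k a j') (tshift (Suc k) b j) m - ser_mult (tshift k b j') (tshift (Suc k) a j) m
      = ser_shift (- of_nat k) X m"
    unfolding X_def ser_shift_diff ser_shift_add ser_shift_mult ser_shift_minus_Suc tshift_def by simp
  ultimately show ?thesis by (simp add: ser_shift_ideal)
qed


section \<open>Expansions of quantum minors\<close>

text \<open>For an arrangement \<open>R\<close> of the rows, \<open>row_product R J\<close> is the product
  \<open>t\<^bsub>R!0,J!0\<^esub>(u) t\<^bsub>R!1,J!1\<^esub>(u-1) \<cdots>\<close> occurring in the minor.\<close>

definition row_factor :: "nat list \<Rightarrow> nat list \<Rightarrow> nat \<Rightarrow> yser" where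
  "row_factor R J k = tshift k (R ! k) (J ! k)"

definition row_product :: "nat list \<Rightarrow> nat list \<Rightarrow> yser" where
  "row_product R J = ser_prod_list (map (row_factor R J) [0..<length J])"

lemma bij_betw_permutes_arrangements:
  assumes dist: "distinct L" and len: "length L = d"
  shows "bij_betw (\<lambda>\<sigma>. map (\<lambda>k. L ! \<sigma> k) [0..<d]) {\<sigma>. \<sigma> permutes {..<d}} (permutations_of_set (set L))"
proof -
  define h where "h \<sigma> = map (\<lambda>k. L ! \<sigma> k) [0..<d]" for \<sigma>
  have nth_inj: "L ! x = L ! y \<longleftrightarrow> x = y" if "x < d" "y < d" for x y
    using that dist len nth_eq_iff_index_eq by metis
  have into: "h \<sigma> \<in> permutations_of_set (set L)" if perm: "\<sigma> permutes {..<d}" for \<sigma>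
  proof
    have "set (h \<sigma>) = (\<lambda>k. L ! k) ` (\<sigma> ` {..<d})" by (auto simp: h_def image_image atLeast0LessThan)
    also have "\<dots> = set L" using permutes_image[OF perm] len by (auto simp: in_set_conv_nth image_iff)
    finally show "set (h \<sigma>) = set L" .
    have "inj_on (\<lambda>k. L ! \<sigma> k) {0..<d}"
    proof (rule inj_onI)
      fix x y assume "x \<in> {0..<d}" "y \<in> {0..<d}" "L ! \<sigma> x = L ! \<sigma> y"
      then have "\<sigma> x = \<sigma> y" using permutes_in_image[OF perm] nth_inj by auto
      then show "x = y" using permutes_inj[OF perm] by (simp add: inj_eq)
    qed
    then show "distinct (h \<sigma>)" by (simp add: h_def distinct_map)
  qed
  have inj: "inj_on h {\<sigma>. \<sigma> permutes {..<d}}"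
  proof (rule inj_onI, rule ext)
    fix \<sigma> \<tau> k assume "\<sigma> \<in> {\<sigma>. \<sigma> permutes {..<d}}" "\<tau> \<in> {\<sigma>. \<sigma> permutes {..<d}}" and eq: "h \<sigma> = h \<tau>"
    then have p: "\<sigma> permutes {..<d}" "\<tau> permutes {..<d}" by auto
    show "\<sigma> k = \<tau> k"
    proof (cases "k < d")
      case True
      then have "L ! \<sigma> k = L ! \<tau> k" using arg_cong[OF eq, of "\<lambda>xs. xs ! k"] by (simp add: h_def)
      then show ?thesis using True permutes_in_image[OF p(1)] permutes_in_image[OF p(2)] nth_inj by simp
    qed (use permutes_not_in[OF p(1)] permutes_not_in[OF p(2)] in simp)
  qed
  have "h ` {\<sigma>. \<sigma> permutes {..<d}} = permutations_of_set (set L)"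
  proof (rule card_subset_eq)
    show "h ` {\<sigma>. \<sigma> permutes {..<d}} \<subseteq> permutations_of_set (set L)" using into by auto
    have "card (h ` {\<sigma>. \<sigma> permutes {..<d}}) = fact d"
      by (simp add: card_image[OF inj] card_permutations)
    then show "card (h ` {\<sigma>. \<sigma> permutes {..<d}}) = card (permutations_of_set (set L))"
      using distinct_card[OF dist] len by simp
  qed simp
  with inj show ?thesis unfolding h_def bij_betw_def by blast
qed

lemma sign_eq_ninv_arrangement:
  assumes L: "sorted_wrt (<) L" "length L = d" and perm: "\<sigma> permutes {..<d}"
  shows "of_int (sign \<sigma>) = (- 1 :: 'a::ring_1) ^ ninv (map (\<lambda>k. L ! \<sigma> k) [0..<d])"
proof -
  have "strict_mono_on {..<d} ((!) L)"
    using L by (auto simp: strict_mono_on_def sorted_wrt_nth_less)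
  moreover have "set (map \<sigma> [0..<d]) \<subseteq> {..<d}"
    using permutes_image[OF perm] by (simp add: atLeast0LessThan)
  ultimately have "ninv (map ((!) L) (map \<sigma> [0..<d])) = ninv (map \<sigma> [0..<d])"
    by (rule ninv_map_mono)
  then have "ninv (map (\<lambda>k. L ! \<sigma> k) [0..<d]) = ninv (map \<sigma> [0..<d])"
    by (simp add: comp_def)
  then show ?thesis unfolding sign_eq_ninv[OF perm] by simp
qed

lemma tminor_row_arrangements:
  assumes L: "sorted_wrt (<) L" and len: "length L = length J"
  shows "tminor L J m = (\<Sum>R\<in>permutations_of_set (set L). yconst ((- 1) ^ ninv R) * row_product R J m)"
proof -
  have dist: "distinct L" using L by (simp add: strict_sorted_iff)
  have factors: "row_product (map (\<lambda>k. L ! \<sigma> k) [0..<length J]) J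
      = ser_prod_list (map (\<lambda>k. ser_shift (- of_nat k) (tser (L ! \<sigma> k) (J ! k))) [0..<length J])" for \<sigma>
    unfolding row_product_def row_factor_def tshift_def
    by (intro arg_cong[where f = ser_prod_list] map_cong) auto
  have "tminor L J m = (\<Sum>\<sigma>\<in>{\<sigma>. \<sigma> permutes {..<length J}}.
      yconst ((- 1) ^ ninv (map (\<lambda>k. L ! \<sigma> k) [0..<length J])) * row_product (map (\<lambda>k. L ! \<sigma> k) [0..<length J]) J m)"
    unfolding tminor_def factors by (intro sum.cong refl) (simp add: sign_eq_ninv_arrangement[OF L len])
  also have "\<dots> = (\<Sum>R\<in>permutations_of_set (set L). yconst ((- 1) ^ ninv R) * row_product R J m)"
    by (rule sum.reindex_bij_betw[OF bij_betw_permutes_arrangements[OF dist len]])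
  finally show ?thesis .
qed


lemma row_product_append:
  assumes "length R1 = length J1" "length R2 = length J2"
  shows "row_product (R1 @ R2) (J1 @ J2) = ser_mult (row_product R1 J1) (ser_shift (- of_nat (length J1)) (row_product R2 J2))"
proof -
  let ?c = "length J1" and ?p = "length J2"
  have u: "[0..<length (J1 @ J2)] = [0..<?c] @ map (\<lambda>i. i + ?c) [0..<?p]"
    using upt_add_eq_append[of 0 ?c ?p] by (simp add: map_add_upt add.commute)
  have m1: "map (row_factor (R1 @ R2) (J1 @ J2)) [0..<?c] = map (row_factor R1 J1) [0..<?c]"
    by (rule map_cong[OF refl]) (use assms in \<open>simp add: row_factor_def nth_append\<close>)
  have m2: "map (row_factor (R1 @ R2) (J1 @ J2)) (map (\<lambda>i. i + ?c) [0..<?p])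
      = map (ser_shift (- of_nat ?c)) (map (row_factor R2 J2) [0..<?p])"
  proof -
    have "row_factor (R1 @ R2) (J1 @ J2) (k + ?c) = ser_shift (- of_nat ?c) (row_factor R2 J2 k)" for k
    proof -
      have e: "(- of_nat ?c + - of_nat k :: complex) = - of_nat (k + ?c)" by simp
      have "row_factor (R1 @ R2) (J1 @ J2) (k + ?c) = ser_shift (- of_nat (k + ?c)) (tser (R2 ! k) (J2 ! k))"
        using assms by (simp add: row_factor_def tshift_def nth_append)
      also have "\<dots> = ser_shift (- of_nat ?c) (row_factor R2 J2 k)"
        unfolding row_factor_def tshift_def ser_shift_shift e ..
      finally show ?thesis .
    qed
    then show ?thesis by simp
  qed
  show ?thesis
    unfolding row_product_def u map_append ser_prod_list_append m1 m2 ser_shift_prod_list ..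
qed


definition row_splits :: "nat list \<Rightarrow> nat \<Rightarrow> (nat list \<times> nat list) set" where
  "row_splits L c = {(K, G). sorted_wrt (<) K \<and> sorted_wrt (<) G \<and> length K = c
      \<and> distinct (K @ G) \<and> set (K @ G) = set L}"

lemma finite_row_splits: "finite (row_splits L c)"
proof -
  let ?B = "{xs. set xs \<subseteq> set L \<and> length xs \<le> length L}"
  have "row_splits L c \<subseteq> ?B \<times> ?B"
  proof (clarify)
    fix K G assume "(K, G) \<in> row_splits L c"
    then have d: "distinct (K @ G)" and s: "set (K @ G) = set L" by (auto simp: row_splits_def)
    have "length K + length G = card (set L)" using distinct_card[OF d] s by simp
    then show "K \<in> ?B \<and> G \<in> ?B" using s card_length[of L] by auto
  qed
  moreover have "finite ?B" by (rule finite_lists_length_le) simp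
  ultimately show ?thesis by (meson finite_SigmaI finite_subset)
qed

lemma sort_arrangement:
  assumes "sorted_wrt (<) K" "R \<in> permutations_of_set (set K)"
  shows "sort R = K"
  by (rule properties_for_sort)
    (use assms in \<open>auto simp: set_eq_iff_mset_eq_distinct[symmetric] strict_sorted_iff permutations_of_set_def\<close>)

lemma length_arrangement:
  fixes K :: "nat list"
  assumes "sorted_wrt (<) K" "R \<in> permutations_of_set (set K)"
  shows "length R = length K"
proof -
  have "distinct K" using assms(1) by (simp add: strict_sorted_iff)
  then show ?thesis using length_finite_permutations_of_set[OF assms(2)] by (simp add: distinct_card)
qed

lemma row_splits_take_drop:
  assumes R: "R \<in> permutations_of_set (set L)" and dist: "distinct L" and c: "c \<le> length L"
  shows "(sort (take c R), sort (drop c R)) \<in> row_splits L c"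
proof -
  have "distinct R" "set R = set L" "length R = length L"
    using R dist by (auto simp: permutations_of_set_def distinct_card[symmetric])
  moreover have "distinct (take c R @ drop c R)" "set (take c R @ drop c R) = set R"
    using \<open>distinct R\<close> by simp_all
  ultimately show ?thesis
    using c unfolding row_splits_def by (auto simp: strict_sorted_iff simp del: append_take_drop_id)
qed

lemma append_arrangements:
  assumes KG: "(K, G) \<in> row_splits L c"
    and R1: "R1 \<in> permutations_of_set (set K)" and R2: "R2 \<in> permutations_of_set (set G)"
  shows "R1 @ R2 \<in> permutations_of_set (set L)" "length R1 = c" "sort R1 = K" "sort R2 = G"
proof -
  have K: "sorted_wrt (<) K" "length K = c" and G: "sorted_wrt (<) G"
    and KGL: "distinct (K @ G)" "set (K @ G) = set L"
    using KG by (auto simp: row_splits_def)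
  show "length R1 = c" using length_arrangement[OF K(1) R1] K(2) by simp
  show "sort R1 = K" "sort R2 = G" using sort_arrangement[OF K(1) R1] sort_arrangement[OF G R2] .
  show "R1 @ R2 \<in> permutations_of_set (set L)"
    using R1 R2 KGL by (auto simp: permutations_of_set_def)
qed

text \<open>An arrangement of \<open>L\<close> is the concatenation of arrangements of its first \<open>c\<close>
  and its remaining entries; sorting the two parts gives a split of \<open>L\<close>.\<close>

lemma sum_arrangements_split:
  assumes dist: "distinct L" and c: "c \<le> length L"
  shows "(\<Sum>R\<in>permutations_of_set (set L). g R)
       = (\<Sum>(K, G)\<in>row_splits L c. \<Sum>R1\<in>permutations_of_set (set K).
            \<Sum>R2\<in>permutations_of_set (set G). g (R1 @ R2))"
proof -
  define B :: "nat list \<times> nat list \<Rightarrow> (nat list \<times> nat list) set"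
    where "B KG = permutations_of_set (set (fst KG)) \<times> permutations_of_set (set (snd KG))" for KG
  define T where "T = Sigma (row_splits L c) B"
  have "(\<Sum>R\<in>permutations_of_set (set L). g R) = (\<Sum>(KG, R)\<in>T. g (fst R @ snd R))"
  proof (rule sum.reindex_bij_witness[where j = "\<lambda>R. ((sort (take c R), sort (drop c R)), (take c R, drop c R))"
        and i = "\<lambda>(KG, R). fst R @ snd R"])
    fix R assume "R \<in> permutations_of_set (set L)"
    then show "((sort (take c R), sort (drop c R)), (take c R, drop c R)) \<in> T"
      using row_splits_take_drop[OF _ dist c] by (auto simp: T_def B_def permutations_of_set_def)
  next
    fix x assume "x \<in> T"
    then obtain K G R1 R2 where "x = ((K, G), (R1, R2))" "(K, G) \<in> row_splits L c"
      "R1 \<in> permutations_of_set (set K)" "R2 \<in> permutations_of_set (set G)"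
      unfolding T_def B_def by auto
    with append_arrangements show "(case x of (KG, R) \<Rightarrow> fst R @ snd R) \<in> permutations_of_set (set L)"
      and "((sort (take c (case x of (KG, R) \<Rightarrow> fst R @ snd R)), sort (drop c (case x of (KG, R) \<Rightarrow> fst R @ snd R))),
          (take c (case x of (KG, R) \<Rightarrow> fst R @ snd R), drop c (case x of (KG, R) \<Rightarrow> fst R @ snd R))) = x"
      by auto
  qed auto
  also have "\<dots> = (\<Sum>KG\<in>row_splits L c. \<Sum>R\<in>B KG. g (fst R @ snd R))"
    unfolding T_def by (rule sum.Sigma[symmetric]) (simp_all add: finite_row_splits B_def)
  finally show ?thesis by (simp add: B_def sum.cartesian_product split_def)
qed

lemma tminor_mult_shift_tminor:
  assumes K: "sorted_wrt (<) K" "length K = length J1" and G: "sorted_wrt (<) G" "length G = length J2"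
  shows "ser_mult (tminor K J1) (ser_shift a (tminor G J2)) m
       = (\<Sum>R1\<in>permutations_of_set (set K). \<Sum>R2\<in>permutations_of_set (set G).
            yconst ((- 1) ^ ninv R1 * (- 1) ^ ninv R2)
              * ser_mult (row_product R1 J1) (ser_shift a (row_product R2 J2)) m)"
proof -
  have "tminor K J1 = (\<lambda>m. \<Sum>R\<in>permutations_of_set (set K). yconst ((- 1) ^ ninv R) * row_product R J1 m)"
    using tminor_row_arrangements[OF K] by blast
  moreover have "tminor G J2 = (\<lambda>m. \<Sum>R\<in>permutations_of_set (set G). yconst ((- 1) ^ ninv R) * row_product R J2 m)"
    using tminor_row_arrangements[OF G] by blast
  ultimately show ?thesis
    by (simp add: ser_shift_sum ser_shift_scal ser_mult_sum_left ser_mult_sum_right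
        ser_mult_scal_left ser_mult_scal_right sum_distrib_left yconst_mult mult.assoc)
qed

lemma tminor_laplace:
  assumes L: "sorted_wrt (<) L" and len: "length L = length J1 + length J2"
  shows "tminor L (J1 @ J2) m = (\<Sum>(K, G)\<in>row_splits L (length J1). yconst ((- 1) ^ ninv (K @ G))
           * ser_mult (tminor K J1) (ser_shift (- of_nat (length J1)) (tminor G J2)) m)"
proof -
  let ?sh = "ser_shift (- of_nat (length J1))"
  have dist: "distinct L" using L by (simp add: strict_sorted_iff)
  have "tminor L (J1 @ J2) m
      = (\<Sum>R\<in>permutations_of_set (set L). yconst ((- 1) ^ ninv R) * row_product R (J1 @ J2) m)"
    using len by (simp add: tminor_row_arrangements[OF L])
  also have "\<dots> = (\<Sum>(K, G)\<in>row_splits L (length J1).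
      \<Sum>R1\<in>permutations_of_set (set K). \<Sum>R2\<in>permutations_of_set (set G).
        yconst ((- 1) ^ ninv (R1 @ R2)) * row_product (R1 @ R2) (J1 @ J2) m)"
    by (rule sum_arrangements_split[OF dist]) (simp add: len)
  also have "\<dots> = (\<Sum>(K, G)\<in>row_splits L (length J1). yconst ((- 1) ^ ninv (K @ G))
           * ser_mult (tminor K J1) (?sh (tminor G J2)) m)"
  proof (rule sum.cong[OF refl], clarify)
    fix K G assume KG: "(K, G) \<in> row_splits L (length J1)"
    then have K: "sorted_wrt (<) K" "length K = length J1" and G: "sorted_wrt (<) G"
      and "distinct (K @ G)" "set (K @ G) = set L"
      by (auto simp: row_splits_def)
    then have "length K + length G = length L" using distinct_card dist by (metis length_append)
    then have G': "length G = length J2" using K(2) len by simp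
    have "yconst ((- 1) ^ ninv (R1 @ R2)) * row_product (R1 @ R2) (J1 @ J2) m
        = yconst ((- 1) ^ ninv (K @ G)) * (yconst ((- 1) ^ ninv R1 * (- 1) ^ ninv R2)
            * ser_mult (row_product R1 J1) (?sh (row_product R2 J2)) m)"
      if "R1 \<in> permutations_of_set (set K)" "R2 \<in> permutations_of_set (set G)" for R1 R2
      using that length_arrangement[OF K(1)] length_arrangement[OF G(1)] K(2) G'
        sort_arrangement[OF K(1)] sort_arrangement[OF G(1)]
      by (simp add: row_product_append minus_one_power_ninv_append[of R1 R2] yconst_mult mult.assoc)
    then show "(\<Sum>R1\<in>permutations_of_set (set K). \<Sum>R2\<in>permutations_of_set (set G).
        yconst ((- 1) ^ ninv (R1 @ R2)) * row_product (R1 @ R2) (J1 @ J2) m)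
      = yconst ((- 1) ^ ninv (K @ G)) * ser_mult (tminor K J1) (?sh (tminor G J2)) m"
      by (simp add: tminor_mult_shift_tminor[OF K G(1) G'] sum_distrib_left)
  qed
  finally show ?thesis .
qed


section \<open>Column antisymmetry of minors modulo the relations\<close>

lemma yideal_double_cancel: "x + x \<in> yideal n \<Longrightarrow> x \<in> yideal n"
  using yideal_mult_left[of "x + x" n "yconst (1/2)"] by (simp only: yconst_half_double)

lemma row_product_split:
  assumes "Suc k < length J"
  shows "row_product R J = ser_mult (ser_prod_list (map (row_factor R J) [0..<k]))
      (ser_mult (ser_mult (row_factor R J k) (row_factor R J (Suc k)))
        (ser_prod_list (map (row_factor R J) [Suc (Suc k)..<length J])))"
proof -
  have "[0..<length J] = [0..<k] @ [k, Suc k] @ [Suc (Suc k)..<length J]"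
    using assms by (metis append_Cons append_Nil upt_add_eq_append upt_conv_Cons zero_le Suc_lessD
        le_add_diff_inverse less_imp_le_nat)
  then show ?thesis
    unfolding row_product_def by (simp add: ser_prod_list_append ser_prod_list_Cons ser_prod_list_Nil ser_mult_assoc)
qed

lemma row_product_swap_antisym:
  assumes k: "Suc k < length J" and len: "length R = length J"
    and R: "set R \<subseteq> {1..n}" and J: "set J \<subseteq> {1..n}"
  shows "row_product R J m - row_product (swap_adj R k) J m
       + (row_product R (swap_adj J k) m - row_product (swap_adj R k) (swap_adj J k) m) \<in> yideal n"
proof -
  define A where "A = ser_prod_list (map (row_factor R J) [0..<k])"
  define B where "B = ser_prod_list (map (row_factor R J) [Suc (Suc k)..<length J])"
  let ?a = "R ! k" and ?b = "R ! Suc k" and ?j = "J ! k" and ?j' = "J ! Suc k"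
  have kR: "Suc k < length R" using k len by simp
  have split: "row_product R' J' = ser_mult A (ser_mult (ser_mult
      (tshift k (R' ! k) (J' ! k)) (tshift (Suc k) (R' ! Suc k) (J' ! Suc k))) B)"
    if "R' \<in> {R, swap_adj R k}" "J' \<in> {J, swap_adj J k}" for R' J'
  proof -
    have "row_factor R' J' i = row_factor R J i" if "i \<noteq> k" "i \<noteq> Suc k" for i
      using \<open>R' \<in> _\<close> \<open>J' \<in> _\<close> that by (auto simp: row_factor_def swap_adj_nth_other)
    then have pre: "map (row_factor R' J') [0..<k] = map (row_factor R J) [0..<k]"
      and suf: "map (row_factor R' J') [Suc (Suc k)..<length J] = map (row_factor R J) [Suc (Suc k)..<length J]"
      by (auto intro: map_cong)
    have lenJ': "length J' = length J" using that by auto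
    have k': "Suc k < length J'" using k lenJ' by simp
    show ?thesis
      unfolding row_product_split[OF k'] lenJ' pre suf by (simp only: A_def B_def row_factor_def)
  qed
  define X where "X = (\<lambda>q. ser_mult (tshift k ?a ?j) (tshift (Suc k) ?b ?j') q
      - ser_mult (tshift k ?b ?j) (tshift (Suc k) ?a ?j') q
      + ser_mult (tshift k ?a ?j') (tshift (Suc k) ?b ?j) q
      - ser_mult (tshift k ?b ?j') (tshift (Suc k) ?a ?j) q)"
  have Rn: "R ! i \<in> {1..n}" if "i < length R" for i using R that nth_mem by blast
  have Jn: "J ! i \<in> {1..n}" if "i < length J" for i using J that nth_mem by blast
  have "X q \<in> yideal n" for q
    unfolding X_def by (rule adjacent_factors_antisym[OF Rn Rn Jn Jn]) (use k kR in simp_all)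
  moreover have "row_product R J m - row_product (swap_adj R k) J m
       + (row_product R (swap_adj J k) m - row_product (swap_adj R k) (swap_adj J k) m)
      = ser_mult A (ser_mult X B) m"
    using split[of R J] split[of "swap_adj R k" J] split[of R "swap_adj J k"]
      split[of "swap_adj R k" "swap_adj J k"] k kR
    by (simp add: X_def swap_adj_nth_k swap_adj_nth_Suc_k fun_eq_iff ser_mult_diff_left ser_mult_add_left
        ser_mult_diff_right ser_mult_add_right algebra_simps)
  ultimately show ?thesis
    by (simp add: ser_mult_ideal_left ser_mult_ideal_right)
qed

text \<open>Pairing each arrangement with the one whose entries \<open>k, k+1\<close> are swapped.\<close>

lemma tminor_double_swap_rows:
  assumes L: "sorted_wrt (<) L" and len: "length L = length J" and k: "Suc k < length J"
  shows "tminor L J m + tminor L J m = (\<Sum>R\<in>permutations_of_set (set L).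
      yconst ((- 1) ^ ninv R) * (row_product R J m - row_product (swap_adj R k) J m))"
proof -
  let ?P = "permutations_of_set (set L)"
  let ?s = "\<lambda>R. yconst ((- 1) ^ ninv R) * row_product R J m"
  have lenP: "Suc k < length R" if "R \<in> ?P" for R
    using length_arrangement[OF L that] len k by simp
  have "(\<Sum>R\<in>?P. ?s R) = (\<Sum>R\<in>?P. ?s (swap_adj R k))"
    by (rule sum.reindex_bij_witness[of _ "\<lambda>R. swap_adj R k" "\<lambda>R. swap_adj R k"])
      (use lenP in \<open>auto simp: swap_adj_swap_adj permutations_of_set_def swap_adj_set swap_adj_distinct\<close>)
  also have "\<dots> = (\<Sum>R\<in>?P. - (yconst ((- 1) ^ ninv R) * row_product (swap_adj R k) J m))"
    using lenP by (intro sum.cong refl)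
      (simp add: minus_one_power_ninv_swap_adj_distinct permutations_of_set_def yconst_uminus)
  finally show ?thesis
    using tminor_row_arrangements[OF L len, of m]
    by (simp add: right_diff_distrib sum_subtractf sum_negf)
qed

lemma tminor_swap_columns:
  assumes L: "sorted_wrt (<) L" "set L \<subseteq> {1..n}" and len: "length L = length J"
    and J: "set J \<subseteq> {1..n}" and k: "Suc k < length J"
  shows "tminor L (swap_adj J k) m + tminor L J m \<in> yideal n"
proof -
  let ?J' = "swap_adj J k"
  have "(tminor L ?J' m + tminor L J m) + (tminor L ?J' m + tminor L J m)
      = (tminor L J m + tminor L J m) + (tminor L ?J' m + tminor L ?J' m)"
    by (simp add: algebra_simps)
  also have "\<dots> = (\<Sum>R\<in>permutations_of_set (set L). yconst ((- 1) ^ ninv R)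
      * (row_product R J m - row_product (swap_adj R k) J m
        + (row_product R ?J' m - row_product (swap_adj R k) ?J' m)))"
    using tminor_double_swap_rows[OF L(1) len k] tminor_double_swap_rows[of L ?J' k m] L(1) len k
    by (simp add: sum.distrib[symmetric] distrib_left)
  also have "\<dots> \<in> yideal n"
  proof (intro yideal_sum yideal_mult_left row_product_swap_antisym[OF k _ _ J])
    fix R assume "R \<in> permutations_of_set (set L)"
    then show "length R = length J" "set R \<subseteq> {1..n}"
      using length_arrangement[OF L(1)] len L(2) by (auto simp: permutations_of_set_def)
  qed
  finally show ?thesis by (rule yideal_double_cancel)
qed

lemma tminor_sort_columns:
  assumes L: "sorted_wrt (<) L" "set L \<subseteq> {1..n}" and len: "length J = length L"
    and J: "set J \<subseteq> {1..n}"
  shows "tminor L (sort J) m - (- 1) ^ ninv J * tminor L J m \<in> yideal n"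
proof -
  define f where "f xs = (if length xs = length L \<and> set xs \<subseteq> {1..n} then tminor L xs m else 0)" for xs
  have "f (sort J) - (- 1) ^ ninv J * f J \<in> yideal n"
  proof (rule sort_sign_congruence)
    fix xs :: "nat list" and k assume k: "Suc k < length xs" "xs ! Suc k < xs ! k"
    show "f (swap_adj xs k) + f xs \<in> yideal n"
    proof (cases "length xs = length L \<and> set xs \<subseteq> {1..n}")
      case True
      then have "tminor L (swap_adj xs k) m + tminor L xs m \<in> yideal n"
        using tminor_swap_columns[OF L _ _ k(1)] by simp
      then show ?thesis using True k by (simp add: f_def swap_adj_set)
    qed (use k in \<open>auto simp: f_def swap_adj_set yideal.zero\<close>)
  qed (auto intro: yideal.zero yideal.add yideal_uminus)
  then show ?thesis using len J by (simp add: f_def)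
qed

lemma sorted_not_distinct_adj:
  assumes "sorted xs" "\<not> distinct xs"
  shows "\<exists>k. Suc k < length xs \<and> xs ! k = xs ! Suc k"
proof -
  have "\<not> sorted_wrt (<) xs" using assms by (simp add: strict_sorted_iff)
  then obtain k where k: "Suc k < length xs" "\<not> xs ! k < xs ! Suc k"
    by (auto simp: sorted_wrt_iff_nth_Suc_transp)
  moreover have "xs ! k \<le> xs ! Suc k" using assms(1) k(1) by (simp add: sorted_iff_nth_Suc)
  ultimately show ?thesis by auto
qed

lemma tminor_repeated_column:
  assumes L: "sorted_wrt (<) L" "set L \<subseteq> {1..n}" and len: "length J = length L"
    and J: "set J \<subseteq> {1..n}" and nd: "\<not> distinct J"
  shows "tminor L J m \<in> yideal n"
proof -
  obtain k where k: "Suc k < length (sort J)" "sort J ! k = sort J ! Suc k"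
    using sorted_not_distinct_adj[of "sort J"] nd by auto
  have "(sort J)[k := sort J ! Suc k] = sort J" using k(2) list_update_id[of "sort J" k] by simp
  then have "swap_adj (sort J) k = sort J"
    unfolding swap_adj_def using k(2) list_update_id[of "sort J" "Suc k"] by simp
  then have "tminor L (sort J) m + tminor L (sort J) m \<in> yideal n"
    using tminor_swap_columns[OF L _ _ k(1)] len J by simp
  then have "tminor L (sort J) m \<in> yideal n" by (rule yideal_double_cancel)
  from yideal_diff[OF this tminor_sort_columns[OF L len J, of m]]
  have "(- 1) ^ ninv J * tminor L J m \<in> yideal n" by simp
  then have "(- 1) ^ ninv J * ((- 1) ^ ninv J * tminor L J m) \<in> yideal n"
    by (rule yideal_mult_left)
  then show ?thesis by (simp flip: mult.assoc power_add)
qed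


section \<open>The two sides in coordinates\<close>

lemma lookup_map_mult:
  "Poly_Mapping.lookup (Poly_Mapping.map ((*) (c::complex)) p) k = c * Poly_Mapping.lookup p k"
  by (simp add: Poly_Mapping.map.rep_eq when_def)

context
  fixes M :: "('a \<Rightarrow>\<^sub>0 complex) \<Rightarrow> ('b \<Rightarrow>\<^sub>0 complex)"
  assumes M_add: "\<And>x y. M (x + y) = M x + M y"
    and M_smult: "\<And>c x. M (Poly_Mapping.map ((*) c) x) = Poly_Mapping.map ((*) c) (M x)"
begin

lemma additive_map_0: "M 0 = 0"
  using M_add[of 0 0] by simp

lemma additive_map_sum: "M (\<Sum>x\<in>A. f x) = (\<Sum>x\<in>A. M (f x))"
  by (induction A rule: infinite_finite_induct) (simp_all add: additive_map_0 M_add)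

lemma lookup_linear_map:
  assumes "finite S" "Poly_Mapping.keys w \<subseteq> S"
  shows "Poly_Mapping.lookup (M w) i
       = (\<Sum>j\<in>S. Poly_Mapping.lookup w j * Poly_Mapping.lookup (M (Poly_Mapping.single j 1)) i)"
proof -
  have "M w = M (\<Sum>j\<in>S. Poly_Mapping.map ((*) (Poly_Mapping.lookup w j)) (Poly_Mapping.single j 1))"
    by (simp add: poly_mapping_sum_single_lookup[OF assms])
  also have "\<dots> = (\<Sum>j\<in>S. Poly_Mapping.map ((*) (Poly_Mapping.lookup w j)) (M (Poly_Mapping.single j 1)))"
    by (simp only: additive_map_sum M_smult)
  finally show ?thesis by (simp add: lookup_sum lookup_map_mult)
qed

end


lemma finite_subs: "finite (subs n k)"
proof -
  have "subs n k \<subseteq> {xs. set xs \<subseteq> {1..n} \<and> length xs = k}" by (auto simp: subs_def)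
  then show ?thesis by (rule finite_subset) (rule finite_lists_length_eq, simp)
qed

lemma lookup_sum_single:
  "Poly_Mapping.lookup (\<Sum>x\<in>A. Poly_Mapping.single (kk x) (cc x)) j = (\<Sum>x\<in>A. if kk x = j then cc x else 0)"
  by (simp add: lookup_sum lookup_single when_def)

lemma keys_sum_single:
  "Poly_Mapping.keys (\<Sum>x\<in>A. Poly_Mapping.single (kk x) (cc x)) \<subseteq> kk ` A"
  using keys_sum[of "\<lambda>x. Poly_Mapping.single (kk x) (cc x)" A] by (auto split: if_splits)

lemma sum_image_collect:
  assumes "finite A"
  shows "(\<Sum>j\<in>kk ` A. yconst (\<Sum>x\<in>A. if kk x = j then cc x else 0) * P j)
       = (\<Sum>x\<in>A. yconst (cc x) * P (kk x))"
proof -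
  have "(\<Sum>j\<in>kk ` A. yconst (\<Sum>x\<in>A. if kk x = j then cc x else 0) * P j)
      = (\<Sum>j\<in>kk ` A. \<Sum>x\<in>A. if kk x = j then yconst (cc x) * P j else 0)"
    by (auto simp: yconst_sum sum_distrib_right intro!: sum.cong)
  also have "\<dots> = (\<Sum>x\<in>A. \<Sum>j\<in>kk ` A. if kk x = j then yconst (cc x) * P j else 0)"
    by (rule sum.swap)
  finally show ?thesis using assms by (simp add: if_distrib[symmetric])
qed

lemma rho_keys_subset:
  assumes "finite S" "Poly_Mapping.keys v \<subseteq> S"
  shows "rho n k v (K, a) = (if K \<in> subs n k then
      (\<Sum>(J, r)\<in>S. yconst (Poly_Mapping.lookup v (J, r)) * (if a \<le> r then tminor K J (r - a) else 0)) else 0)"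
proof -
  have "\<And>j. Poly_Mapping.lookup v j \<noteq> 0 \<Longrightarrow> j \<in> S" using assms(2) by (auto simp: in_keys_iff)
  then show ?thesis unfolding rho_def
    by (auto intro!: sum.mono_neutral_left simp: assms in_keys_iff)
qed

lemma rho2_keys_subset:
  assumes "finite S" "Poly_Mapping.keys w \<subseteq> S"
  shows "rho2 n k l w (i1, i2) = (\<Sum>j\<in>S. yconst (Poly_Mapping.lookup w j)
      * rho n k (Poly_Mapping.single (fst j) 1) i1 * rho n l (Poly_Mapping.single (snd j) 1) i2)"
proof -
  have "\<And>j. Poly_Mapping.lookup w j \<noteq> 0 \<Longrightarrow> j \<in> S" using assms(2) by (auto simp: in_keys_iff)
  then show ?thesis unfolding rho2_def
    by (auto intro!: sum.mono_neutral_left simp: assms in_keys_iff)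
qed

definition rho_basis :: "nat \<Rightarrow> nat \<Rightarrow> cidx \<Rightarrow> cidx \<Rightarrow> fyang" where
  "rho_basis n k Jr Ka = (if fst Ka \<in> subs n k \<and> snd Ka \<le> snd Jr
     then tminor (fst Ka) (fst Jr) (snd Jr - snd Ka) else 0)"

lemma rho_single: "rho n k (Poly_Mapping.single Jr 1) Ka = rho_basis n k Jr Ka"
  by (cases Jr, cases Ka) (simp add: rho_def rho_basis_def)

lemma rho_sum_single:
  assumes "finite A"
  shows "rho n k (\<Sum>x\<in>A. Poly_Mapping.single (kk x) (cc x)) i = (\<Sum>x\<in>A. yconst (cc x) * rho_basis n k (kk x) i)"
proof -
  obtain K a where i: "i = (K, a)" by (cases i)
  have "rho n k (\<Sum>x\<in>A. Poly_Mapping.single (kk x) (cc x)) (K, a)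
      = (\<Sum>j\<in>kk ` A. yconst (\<Sum>x\<in>A. if kk x = j then cc x else 0) * rho_basis n k j (K, a))"
    by (subst rho_keys_subset[of "kk ` A"])
      (auto simp: assms keys_sum_single lookup_sum_single rho_basis_def case_prod_beta intro!: sum.cong)
  then show ?thesis by (simp add: i sum_image_collect[OF assms])
qed

lemma rho2_sum_single:
  assumes "finite A"
  shows "rho2 n k l (\<Sum>x\<in>A. Poly_Mapping.single (kk x) (cc x)) (i1, i2)
    = (\<Sum>x\<in>A. yconst (cc x) * (rho_basis n k (fst (kk x)) i1 * rho_basis n l (snd (kk x)) i2))"
proof -
  have "rho2 n k l (\<Sum>x\<in>A. Poly_Mapping.single (kk x) (cc x)) (i1, i2)
      = (\<Sum>j\<in>kk ` A. yconst (\<Sum>x\<in>A. if kk x = j then cc x else 0)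
          * (rho_basis n k (fst j) i1 * rho_basis n l (snd j) i2))"
    by (subst rho2_keys_subset[of "kk ` A"])
      (simp_all add: assms keys_sum_single lookup_sum_single rho_single mult.assoc)
  then show ?thesis by (simp add: sum_image_collect[OF assms])
qed

definition ser_monom :: "nat \<Rightarrow> yser" where "ser_monom a = (\<lambda>r. if r = a then 1 else 0)"
definition shift_monom :: "complex \<Rightarrow> nat \<Rightarrow> yser" where "shift_monom c a = (\<lambda>m. yconst (shiftcoef c a m))"

lemma ser_mult_monom_left: "ser_mult (ser_monom a) f m = (if a \<le> m then f (m - a) else 0)"
proof -
  have "ser_mult (ser_monom a) f m = (\<Sum>x\<le>m. if x = a then f (m - x) else 0)"
    unfolding ser_mult_def ser_monom_def by (rule sum.cong) auto
  then show ?thesis by simp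
qed

lemma ser_mult_monom_right: "ser_mult f (ser_monom a) m = (if a \<le> m then f (m - a) else 0)"
proof -
  have "ser_mult f (ser_monom a) m = (\<Sum>x\<le>m. if x = m - a \<and> a \<le> m then f x else 0)"
    unfolding ser_mult_def ser_monom_def by (rule sum.cong) auto
  also have "\<dots> = (if a \<le> m then f (m - a) else 0)"
    by (cases "a \<le> m") simp_all
  finally show ?thesis .
qed

lemma ser_monom_commute: "ser_mult (ser_monom a) f = ser_mult f (ser_monom a)"
  by (rule ext) (simp add: ser_mult_monom_left ser_mult_monom_right)

lemma ser_shift_monom: "ser_shift c (ser_monom a) = shift_monom c a"
proof
  fix m
  have "ser_shift c (ser_monom a) m = (\<Sum>r\<le>m. if r = a then yconst (shiftcoef c a m) else 0)"
    unfolding ser_shift_def ser_monom_def by (rule sum.cong) auto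
  also have "\<dots> = yconst (shiftcoef c a m)" by (auto simp: shiftcoef_eq_0)
  finally show "ser_shift c (ser_monom a) m = shift_monom c a m" by (simp add: shift_monom_def)
qed

lemma rho_basis_eq:
  "rho_basis n k (J, r) (K, a) = (if K \<in> subs n k then ser_mult (ser_monom a) (tminor K J) r else 0)"
  by (simp add: rho_basis_def ser_mult_monom_left)

lemma gen2_sum: "gen2 c I Lam s = (\<Sum>x\<in>Sigma {..s} (\<lambda>m. {..m}). Poly_Mapping.single ((I, snd x), (Lam, s - fst x)) (shiftcoef (of_nat c) (snd x) (fst x)))"
  unfolding gen2_def by (simp add: sum.Sigma case_prod_beta)

lemma lookup_gen2:
  "Poly_Mapping.lookup (gen2 c K G t) ((K', a), (G', b))
     = (if K' = K \<and> G' = G \<and> b \<le> t then shiftcoef (of_nat c) a (t - b) else 0)"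
proof -
  define P where "P m = (K' = K \<and> G' = G \<and> m = t - b \<and> b \<le> t)" for m
  have "Poly_Mapping.lookup (gen2 c K G t) ((K', a), (G', b))
      = (\<Sum>m\<le>t. \<Sum>r\<le>m. if r = a then (if P m then shiftcoef (of_nat c) r m else 0) else 0)"
    unfolding gen2_def lookup_sum lookup_single when_def P_def
    by (intro sum.cong refl) auto
  also have "\<dots> = (\<Sum>m\<le>t. if m = t - b then (if a \<le> m \<and> P m then shiftcoef (of_nat c) a m else 0) else 0)"
    by (intro sum.cong refl) (auto simp: P_def)
  also have "\<dots> = (if a \<le> t - b \<and> P (t - b) then shiftcoef (of_nat c) a (t - b) else 0)"
    by simp
  also have "\<dots> = (if K' = K \<and> G' = G \<and> b \<le> t then shiftcoef (of_nat c) a (t - b) else 0)"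
    by (auto simp: shiftcoef_eq_0 P_def)
  finally show ?thesis .
qed

lemma lookup_fvec: "Poly_Mapping.lookup (fvec J r) (L, a) = (if distinct J \<and> L = sort J \<and> a = r then (-1) ^ ninv J else 0)"
  by (auto simp: fvec_def lookup_single when_def)

lemma lookup_img:
  "Poly_Mapping.lookup (img c K G t) (L, a)
     = (if distinct (K @ G) \<and> L = sort (K @ G) then shiftcoef (of_nat c) a t * (-1) ^ ninv (K @ G) else 0)"
proof -
  have "Poly_Mapping.lookup (img c K G t) (L, a)
      = (\<Sum>r\<le>t. if r = a then (if distinct (K @ G) \<and> L = sort (K @ G) then shiftcoef (of_nat c) a t * (-1) ^ ninv (K @ G) else 0) else 0)"
    unfolding img_def lookup_sum lookup_map_mult lookup_fvec by (intro sum.cong refl) auto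
  also have "\<dots> = (if a \<le> t then (if distinct (K @ G) \<and> L = sort (K @ G) then shiftcoef (of_nat c) a t * (-1) ^ ninv (K @ G) else 0) else 0)"
    by simp
  also have "\<dots> = (if distinct (K @ G) \<and> L = sort (K @ G) then shiftcoef (of_nat c) a t * (-1) ^ ninv (K @ G) else 0)"
    by (auto simp: shiftcoef_eq_0)
  finally show ?thesis .
qed

lemma map_mult_zero: "Poly_Mapping.map ((*) (x::complex)) 0 = 0"
  by (rule poly_mapping_eqI) (simp add: lookup_map_mult)

lemma img_sum: "img c I Lam s = (if distinct (I @ Lam) then
    (\<Sum>r\<le>s. Poly_Mapping.single (sort (I @ Lam), r) (shiftcoef (of_nat c) r s * (-1) ^ ninv (I @ Lam))) else 0)"
  unfolding img_def fvec_def by (cases "distinct (I @ Lam)") (simp_all only: if_True if_False map_single map_mult_zero sum.neutral_const mult_zero_right)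


definition minor_pair :: "nat \<Rightarrow> nat list \<Rightarrow> nat list \<Rightarrow> nat list \<Rightarrow> nat list \<Rightarrow> yser" where
  "minor_pair c I Lam K G = ser_mult (ser_shift (of_nat c) (tminor K I)) (tminor G Lam)"

lemma rho2_gen2_basis:
  "rho2 n c p (gen2 c I Lam s) ((K, a), (G, b)) = (if K \<in> subs n c \<and> G \<in> subs n p then
     ser_mult (ser_shift (of_nat c) (ser_mult (ser_monom a) (tminor K I))) (ser_mult (ser_monom b) (tminor G Lam)) s else 0)"
proof -
  define X1 where "X1 = ser_mult (ser_monom a) (tminor K I)"
  define X2 where "X2 = ser_mult (ser_monom b) (tminor G Lam)"
  have fin: "finite (Sigma {..s} (\<lambda>m. {..m}))" by simp
  have "rho2 n c p (gen2 c I Lam s) ((K, a), (G, b))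
      = (\<Sum>x\<in>Sigma {..s} (\<lambda>m. {..m}). yconst (shiftcoef (of_nat c) (snd x) (fst x))
           * (rho_basis n c (I, snd x) (K, a) * rho_basis n p (Lam, s - fst x) (G, b)))"
    unfolding gen2_sum by (subst rho2_sum_single[OF fin]) simp
  also have "\<dots> = (if K \<in> subs n c \<and> G \<in> subs n p then
      (\<Sum>x\<in>Sigma {..s} (\<lambda>m. {..m}). yconst (shiftcoef (of_nat c) (snd x) (fst x)) * (X1 (snd x) * X2 (s - fst x))) else 0)"
    by (cases "K \<in> subs n c"; cases "G \<in> subs n p") (simp_all add: rho_basis_eq X1_def X2_def)
  also have "(\<Sum>x\<in>Sigma {..s} (\<lambda>m. {..m}). yconst (shiftcoef (of_nat c) (snd x) (fst x)) * (X1 (snd x) * X2 (s - fst x)))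
      = (\<Sum>m\<le>s. \<Sum>r\<le>m. yconst (shiftcoef (of_nat c) r m) * (X1 r * X2 (s - m)))"
    by (simp add: sum.Sigma case_prod_beta)
  also have "\<dots> = ser_mult (ser_shift (of_nat c) X1) X2 s"
    unfolding ser_mult_def ser_shift_def by (simp add: sum_distrib_right mult.assoc)
  finally show ?thesis by (simp add: X1_def X2_def)
qed

lemma ser_mult_shift_monom_rearrange:
  "ser_mult (ser_shift c (ser_mult (ser_monom a) T1)) (ser_mult (ser_monom b) T2)
     = ser_mult (ser_mult (shift_monom c a) (ser_monom b)) (ser_mult (ser_shift c T1) T2)"
proof -
  have "ser_mult (ser_shift c (ser_mult (ser_monom a) T1)) (ser_mult (ser_monom b) T2)
      = ser_mult (shift_monom c a) (ser_mult (ser_mult (ser_shift c T1) (ser_monom b)) T2)"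
    by (simp add: ser_shift_mult ser_shift_monom ser_mult_assoc)
  also have "\<dots> = ser_mult (shift_monom c a) (ser_mult (ser_mult (ser_monom b) (ser_shift c T1)) T2)"
    by (simp add: ser_monom_commute)
  also have "\<dots> = ser_mult (ser_mult (shift_monom c a) (ser_monom b)) (ser_mult (ser_shift c T1) T2)"
    by (simp add: ser_mult_assoc)
  finally show ?thesis .
qed

lemma rho2_gen2:
  "rho2 n c p (gen2 c I Lam s) j = (\<Sum>x\<in>subs n c \<times> subs n p. \<Sum>t\<le>s.
      yconst (Poly_Mapping.lookup (gen2 c (fst x) (snd x) t) j) * minor_pair c I Lam (fst x) (snd x) (s - t))"
proof -
  obtain K a G b where j: "j = ((K, a), (G, b))" by (metis prod.collapse)
  define Y where "Y = minor_pair c I Lam K G"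
  have "(\<Sum>x\<in>subs n c \<times> subs n p. \<Sum>t\<le>s.
      yconst (Poly_Mapping.lookup (gen2 c (fst x) (snd x) t) j) * minor_pair c I Lam (fst x) (snd x) (s - t))
    = (\<Sum>x\<in>subs n c \<times> subs n p. if x = (K, G) then
        (\<Sum>t\<le>s. yconst (if b \<le> t then shiftcoef (of_nat c) a (t - b) else 0) * Y (s - t)) else 0)"
    unfolding j lookup_gen2
  proof (rule sum.cong[OF refl])
    fix x
    show "(\<Sum>t\<le>s. yconst (if K = fst x \<and> G = snd x \<and> b \<le> t then shiftcoef (of_nat c) a (t - b) else 0)
          * minor_pair c I Lam (fst x) (snd x) (s - t))
        = (if x = (K, G) then \<Sum>t\<le>s. yconst (if b \<le> t then shiftcoef (of_nat c) a (t - b) else 0) * Y (s - t) else 0)"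
    proof (cases "x = (K, G)")
      case False
      then have "(K = fst x \<and> G = snd x \<and> b \<le> t) = False" for t by auto
      with False show ?thesis by (simp only: if_False yconst_0 mult_zero_left sum.neutral_const)
    qed (simp add: Y_def)
  qed
  also have "\<dots> = (if K \<in> subs n c \<and> G \<in> subs n p then
        (\<Sum>t\<le>s. yconst (if b \<le> t then shiftcoef (of_nat c) a (t - b) else 0) * Y (s - t)) else 0)"
    by (simp add: finite_subs)
  also have "(\<Sum>t\<le>s. yconst (if b \<le> t then shiftcoef (of_nat c) a (t - b) else 0) * Y (s - t))
      = ser_mult (ser_mult (shift_monom (of_nat c) a) (ser_monom b)) Y s"
    unfolding ser_mult_def[of _ Y] by (rule sum.cong[OF refl]) (simp add: ser_mult_monom_right shift_monom_def)
  finally show ?thesis unfolding j rho2_gen2_basis ser_mult_shift_monom_rearrange Y_def minor_pair_def by simp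
qed

lemma row_splits_eq_subs:
  assumes L: "L \<in> subs n (c + p)"
  shows "{x \<in> subs n c \<times> subs n p. distinct (fst x @ snd x) \<and> L = sort (fst x @ snd x)} = row_splits L c"
proof (intro equalityI subsetI)
  fix x assume x: "x \<in> {x \<in> subs n c \<times> subs n p. distinct (fst x @ snd x) \<and> L = sort (fst x @ snd x)}"
  obtain K G where x2: "x = (K, G)" by (cases x)
  have "set L = set (K @ G)" using x x2 by simp
  then show "x \<in> row_splits L c" using x x2 by (auto simp: row_splits_def subs_def)
next
  fix x assume x: "x \<in> row_splits L c"
  obtain K G where x2: "x = (K, G)" by (cases x)
  have K: "sorted_wrt (<) K" and G: "sorted_wrt (<) G" and lK: "length K = c"
    and d: "distinct (K @ G)" and s: "set (K @ G) = set L" using x x2 by (auto simp: row_splits_def)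
  have Ls: "sorted_wrt (<) L" and Ln: "set L \<subseteq> {1..n}" and Ll: "length L = c + p" using L by (auto simp: subs_def)
  have "length K + length G = length L"
    using distinct_card[OF d] s distinct_card[of L] Ls by (simp add: strict_sorted_iff)
  then have lG: "length G = p" using lK Ll by simp
  have "sort (K @ G) = L"
  proof (rule properties_for_sort)
    show "mset L = mset (K @ G)"
      using set_eq_iff_mset_eq_distinct[of L "K @ G"] d s Ls by (simp add: strict_sorted_iff)
    show "sorted L" using Ls by (simp add: strict_sorted_iff)
  qed
  then show "x \<in> {x \<in> subs n c \<times> subs n p. distinct (fst x @ snd x) \<and> L = sort (fst x @ snd x)}"
    using x2 K G lK lG d s Ln by (auto simp: subs_def)
qed


lemma tensor_map_linear_combination:
  fixes M :: "cvec2 \<Rightarrow> cvec"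
  assumes M_add: "\<And>x y. M (x + y) = M x + M y"
    and M_smult: "\<And>c x. M (Poly_Mapping.map ((*) c) x) = Poly_Mapping.map ((*) c) (M x)"
    and X: "finite X" and Z: "\<And>j. Z j = (\<Sum>x\<in>X. yconst (Poly_Mapping.lookup (g x) j) * y x)"
  shows "tensor_map M Z i = (\<Sum>x\<in>X. yconst (Poly_Mapping.lookup (M (g x)) i) * y x)"
proof -
  define U where "U = (\<Union>x\<in>X. Poly_Mapping.keys (g x))"
  define mj where "mj j = Poly_Mapping.lookup (M (Poly_Mapping.single j 1)) i" for j
  have U: "finite U" using X by (simp add: U_def)
  have "Z j = 0" if "j \<notin> U" for j
    using that by (auto simp: Z U_def in_keys_iff intro!: sum.neutral)
  then have "tensor_map M Z i = (\<Sum>j\<in>U. yconst (mj j) * Z j)"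
    unfolding tensor_map_def mj_def by (intro sum.mono_neutral_left U) auto
  also have "\<dots> = (\<Sum>j\<in>U. \<Sum>x\<in>X. yconst (Poly_Mapping.lookup (g x) j * mj j) * y x)"
    by (simp add: Z sum_distrib_left yconst_swap mult.assoc[symmetric] yconst_mult[symmetric] mult.commute)
  also have "\<dots> = (\<Sum>x\<in>X. \<Sum>j\<in>U. yconst (Poly_Mapping.lookup (g x) j * mj j) * y x)"
    by (rule sum.swap)
  also have "\<dots> = (\<Sum>x\<in>X. yconst (Poly_Mapping.lookup (M (g x)) i) * y x)"
  proof (rule sum.cong[OF refl])
    fix x assume "x \<in> X"
    then have "Poly_Mapping.keys (g x) \<subseteq> U" by (auto simp: U_def)
    then show "(\<Sum>j\<in>U. yconst (Poly_Mapping.lookup (g x) j * mj j) * y x)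
        = yconst (Poly_Mapping.lookup (M (g x)) i) * y x"
      using lookup_linear_map[OF M_add M_smult U] by (simp add: mj_def yconst_sum sum_distrib_right)
  qed
  finally show ?thesis .
qed

lemma tensor_map_rho2_gen2:
  fixes M :: "cvec2 \<Rightarrow> cvec"
  assumes M_add: "\<And>x y. M (x + y) = M x + M y"
    and M_smult: "\<And>c x. M (Poly_Mapping.map ((*) c) x) = Poly_Mapping.map ((*) c) (M x)"
    and M_gen2: "\<And>K G t. K \<in> subs n c \<Longrightarrow> G \<in> subs n p \<Longrightarrow> M (gen2 c K G t) = img c K G t"
  shows "tensor_map M (rho2 n c p (gen2 c I Lam s)) (L, a) = ser_mult (shift_monom (of_nat c) a)
      (\<lambda>q. \<Sum>(K, G)\<in>subs n c \<times> subs n p. if distinct (K @ G) \<and> L = sort (K @ G)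
         then yconst ((- 1) ^ ninv (K @ G)) * minor_pair c I Lam K G q else 0) s"
proof -
  let ?KG = "subs n c \<times> subs n p"
  have "tensor_map M (rho2 n c p (gen2 c I Lam s)) (L, a) = (\<Sum>z\<in>?KG \<times> {..s}.
      yconst (Poly_Mapping.lookup (M (gen2 c (fst (fst z)) (snd (fst z)) (snd z))) (L, a))
        * minor_pair c I Lam (fst (fst z)) (snd (fst z)) (s - snd z))"
    by (rule tensor_map_linear_combination[OF M_add M_smult])
      (simp_all add: rho2_gen2 finite_subs sum.cartesian_product split_def)
  also have "\<dots> = (\<Sum>x\<in>?KG. \<Sum>t\<le>s. yconst (Poly_Mapping.lookup (img c (fst x) (snd x) t) (L, a))
        * minor_pair c I Lam (fst x) (snd x) (s - t))"
    by (auto simp: M_gen2 sum.cartesian_product split_def intro!: sum.cong)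
  also have "\<dots> = (\<Sum>t\<le>s. yconst (shiftcoef (of_nat c) a t) * (\<Sum>x\<in>?KG.
      if distinct (fst x @ snd x) \<and> L = sort (fst x @ snd x)
      then yconst ((- 1) ^ ninv (fst x @ snd x)) * minor_pair c I Lam (fst x) (snd x) (s - t) else 0))"
  proof -
    have "yconst (Poly_Mapping.lookup (img c (fst x) (snd x) t) (L, a)) * minor_pair c I Lam (fst x) (snd x) (s - t)
        = yconst (shiftcoef (of_nat c) a t) * (if distinct (fst x @ snd x) \<and> L = sort (fst x @ snd x)
            then yconst ((- 1) ^ ninv (fst x @ snd x)) * minor_pair c I Lam (fst x) (snd x) (s - t) else 0)"
      for x t
      by (simp add: lookup_img yconst_mult mult.assoc)
    then show ?thesis by (simp only: sum_distrib_left sum.swap[of _ ?KG])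
  qed
  finally show ?thesis
    unfolding ser_mult_def shift_monom_def by (simp add: case_prod_beta)
qed

lemma sum_splits_minor_pair:
  assumes I: "length I = c" and Lam: "length Lam = p"
  shows "(\<Sum>(K, G)\<in>subs n c \<times> subs n p. if distinct (K @ G) \<and> L = sort (K @ G)
         then yconst ((- 1) ^ ninv (K @ G)) * minor_pair c I Lam K G q else 0)
       = (if L \<in> subs n (c + p) then ser_shift (of_nat c) (tminor L (I @ Lam)) q else 0)"
proof (cases "L \<in> subs n (c + p)")
  case False
  have "L \<in> subs n (c + p)" if "K \<in> subs n c" "G \<in> subs n p" "distinct (K @ G)" "L = sort (K @ G)" for K G
    using that by (auto simp: subs_def strict_sorted_iff)
  with False show ?thesis by (auto intro!: sum.neutral)
next
  case L: True
  then have Ls: "sorted_wrt (<) L" and Ll: "length L = c + p" by (auto simp: subs_def)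
  have shift_back: "ser_shift (of_nat c) (ser_shift (- of_nat c) f) = f" for f
    by (simp add: ser_shift_shift ser_shift_zero)
  have "tminor L (I @ Lam) = (\<lambda>m. \<Sum>(K, G)\<in>row_splits L c. yconst ((- 1) ^ ninv (K @ G))
      * ser_mult (tminor K I) (ser_shift (- of_nat c) (tminor G Lam)) m)"
    by (rule ext) (use Ll I Lam in \<open>simp add: tminor_laplace[OF Ls]\<close>)
  then have "ser_shift (of_nat c) (tminor L (I @ Lam))
      = (\<lambda>q. \<Sum>(K, G)\<in>row_splits L c. yconst ((- 1) ^ ninv (K @ G)) * minor_pair c I Lam K G q)"
    unfolding ser_shift_sum case_prod_beta ser_shift_scal ser_shift_mult shift_back minor_pair_def
    by (simp only: ser_shift_sum case_prod_beta ser_shift_scal ser_shift_mult shift_back)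
  then have "ser_shift (of_nat c) (tminor L (I @ Lam)) q
      = (\<Sum>(K, G)\<in>row_splits L c. yconst ((- 1) ^ ninv (K @ G)) * minor_pair c I Lam K G q)"
    by simp
  also have "\<dots> = (\<Sum>(K, G)\<in>subs n c \<times> subs n p. if distinct (K @ G) \<and> L = sort (K @ G)
         then yconst ((- 1) ^ ninv (K @ G)) * minor_pair c I Lam K G q else 0)"
    unfolding row_splits_eq_subs[OF L, symmetric]
    by (simp add: sum.inter_filter finite_subs case_prod_beta)
  finally show ?thesis using L by simp
qed

lemma rho_img:
  "rho n d (img c I Lam s) (L, a) = ser_mult (shift_monom (of_nat c) a)
     (\<lambda>q. if L \<in> subs n d \<and> distinct (I @ Lam)
        then yconst ((- 1) ^ ninv (I @ Lam)) * ser_shift (of_nat c) (tminor L (sort (I @ Lam))) q else 0) s"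
proof (cases "L \<in> subs n d \<and> distinct (I @ Lam)")
  case True
  let ?T = "tminor L (sort (I @ Lam))" and ?eps = "(- 1 :: complex) ^ ninv (I @ Lam)"
  have "rho n d (img c I Lam s) (L, a)
      = (\<Sum>r\<le>s. yconst (shiftcoef (of_nat c) r s * ?eps) * ser_mult (ser_monom a) ?T r)"
    using True by (simp add: img_sum rho_sum_single rho_basis_eq)
  also have "\<dots> = yconst ?eps * ser_shift (of_nat c) (ser_mult (ser_monom a) ?T) s"
    unfolding ser_shift_def
    by (simp add: sum_distrib_left yconst_mult mult.assoc yconst_swap)
  also have "\<dots> = ser_mult (shift_monom (of_nat c) a) (\<lambda>q. yconst ?eps * ser_shift (of_nat c) ?T q) s"
    by (simp add: ser_shift_mult ser_shift_monom ser_mult_scal_right)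
  finally show ?thesis using True by simp
next
  case False
  then have "rho n d (img c I Lam s) (L, a) = 0"
    by (auto simp: img_sum rho_sum_single rho_basis_eq rho_def)
  then show ?thesis by (simp only: if_not_P[OF False]) (simp add: ser_mult_def)
qed

lemma tminor_columns_sorted:
  assumes L: "L \<in> subs n d" and J: "set J \<subseteq> {1..n}" "length J = d"
  shows "tminor L J m - (if distinct J then yconst ((- 1) ^ ninv J) * tminor L (sort J) m else 0) \<in> yideal n"
proof -
  have L': "sorted_wrt (<) L" "set L \<subseteq> {1..n}" and len: "length J = length L"
    using L J by (auto simp: subs_def)
  show ?thesis
  proof (cases "distinct J")
    case True
    have "(- 1) ^ ninv J * (tminor L (sort J) m - (- 1) ^ ninv J * tminor L J m) \<in> yideal n"
      by (rule yideal_mult_left[OF tminor_sort_columns[OF L' len J(1)]])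
    then have "- (tminor L J m - (- 1) ^ ninv J * tminor L (sort J) m) \<in> yideal n"
      by (simp add: algebra_simps flip: mult.assoc power_add)
    then show ?thesis
      using True yideal_uminus by (fastforce simp: minus_one_power_yconst)
  next
    case False
    then show ?thesis using tminor_repeated_column[OF L' len J(1)] by simp
  qed
qed

lemma shifted_tminor_columns_sorted:
  assumes J: "set J \<subseteq> {1..n}" "length J = d"
  shows "(if L \<in> subs n d then ser_shift (of_nat c) (tminor L J) q else 0)
       - (if L \<in> subs n d \<and> distinct J
          then yconst ((- 1) ^ ninv J) * ser_shift (of_nat c) (tminor L (sort J)) q else 0)
       \<in> yideal n"
proof (cases "L \<in> subs n d")
  case L: True
  define D where "D = (\<lambda>m. tminor L J m
      - (if distinct J then yconst ((- 1) ^ ninv J) * tminor L (sort J) m else 0))"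
  have "D m \<in> yideal n" for m
    using tminor_columns_sorted[OF L J] by (simp add: D_def)
  moreover have "ser_shift (of_nat c) (tminor L J) q
       - (if distinct J then yconst ((- 1) ^ ninv J) * ser_shift (of_nat c) (tminor L (sort J)) q else 0)
      = ser_shift (of_nat c) D q"
  proof (cases "distinct J")
    case False
    then have "D = tminor L J" by (simp only: D_def if_False diff_zero)
    with False show ?thesis by simp
  qed (simp add: D_def ser_shift_diff ser_shift_scal)
  ultimately show ?thesis using L by (simp add: ser_shift_ideal)
qed (simp add: yideal.zero)

theorem mainTheorem7:
  fixes n d p :: nat and M :: "cvec2 \<Rightarrow> cvec"
  assumes "1 \<le> p" and "p < d" and "d \<le> n"
    and M_add: "\<And>x y. M (x + y) = M x + M y"
    and M_smult: "\<And>c x. M (Poly_Mapping.map ((*) c) x) = Poly_Mapping.map ((*) c) (M x)"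
    and M_mu: "\<And>I Lam s. I \<in> subs n (d - p) \<Longrightarrow> Lam \<in> subs n p \<Longrightarrow>
                 M (gen2 (d - p) I Lam s) = img (d - p) I Lam s"
  shows "\<forall>I\<in>subs n (d - p). \<forall>Lam\<in>subs n p. \<forall>s i.
           yeq n (tensor_map M (rho2 n (d - p) p (gen2 (d - p) I Lam s)) i)
                 (rho n d (img (d - p) I Lam s) i)"
proof (intro ballI allI)
  fix I Lam s and i :: cidx
  assume I: "I \<in> subs n (d - p)" and Lam: "Lam \<in> subs n p"
  obtain L a where i: "i = (L, a)" by (cases i)
  define c where "c = d - p"
  have d: "d = c + p" using \<open>p < d\<close> by (simp add: c_def)
  have lens: "length I = c" "length Lam = p" using I Lam by (auto simp: subs_def c_def)
  have IL: "set (I @ Lam) \<subseteq> {1..n}" "length (I @ Lam) = d"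
    using I Lam lens d by (auto simp: subs_def)
  have "tensor_map M (rho2 n c p (gen2 c I Lam s)) (L, a) - rho n d (img c I Lam s) (L, a)
      = ser_mult (shift_monom (of_nat c) a) (\<lambda>q.
          (if L \<in> subs n d then ser_shift (of_nat c) (tminor L (I @ Lam)) q else 0)
          - (if L \<in> subs n d \<and> distinct (I @ Lam)
             then yconst ((- 1) ^ ninv (I @ Lam)) * ser_shift (of_nat c) (tminor L (sort (I @ Lam))) q
             else 0)) s"
    using tensor_map_rho2_gen2[of M n c p, OF M_add M_smult M_mu[folded c_def]]
      sum_splits_minor_pair[OF lens] d by (simp add: rho_img ser_mult_diff_right)
  also have "\<dots> \<in> yideal n"
    by (intro ser_mult_ideal_right shifted_tminor_columns_sorted[OF IL])
  finally show "yeq n (tensor_map M (rho2 n (d - p) p (gen2 (d - p) I Lam s)) i)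
      (rho n d (img (d - p) I Lam s) i)"
    by (simp add: yeq_def i c_def)
qed

end
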